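(* Let $0<\delta<1$ and $\phi_h(u)=\max\{1-u,0\}$. Suppose $\rho$ satisfies the Tsybakov noise condition with exponent $q$, $\log\mathcal N(\mathcal B_{K,1},\varepsilon)\le\mathcal A\psi(\varepsilon)$ for all $\varepsilon>0$ (with $\mathcal A>0$, $\psi:\mathbf R_+\to\mathbf R_+$ decreasing and continuous), and there are $\theta>0$, $C_4>0$ with $\big[\frac{\mathcal A\psi(\sqrt\lambda m^{-\theta})+1}{m}\big]^{\frac{q+1}{q+2}}\ge C_4m^{-\theta}$. Then with probability at least $1-\frac\delta2$, $$\mathcal S_2^{\phi_h}(D,\lambda)\le C_q\big\{\mathcal E^{\phi_h}(\pi f_{D,\lambda})-\mathcal E^{\phi_h}(f_\rho^{\phi_h})\big\}+C_7\Big[\frac{\mathcal A\psi(\sqrt\lambda m^{-\theta})+1}{m}\Big]^{\frac{q+1}{q+2}}\log\frac4\delta,$$ where $\mathcal S_2^{\phi_h}(D,\lambda)=[\mathcal E^{\phi_h}(\pi f_{D,\lambda})-\mathcal E^{\phi_h}(f_\rho^{\phi_h})]-[\mathcal E_D^{\phi_h}(\pi f_{D,\lambda})-\mathcal E_D^{\phi_h}(f_\rho^{\phi_h})]$, $C_q=\frac{q}{2q+2}\cdot2^{\frac{q+1}{2q}}$, and $C_7$ is a constant independent of $m,\lambda,\delta$.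
   Context: Setting: $X=[0,1]^d$, $Y=\{-1,1\}$, $\rho$ a Borel probability measure on $Z=X\times Y$ with marginal $\rho_X$; $\eta(x)=\mathbf P[y=1|x]$; $D=\{(x_i,y_i)\}_{i=1}^m$ i.i.d. from $\rho$. $\mathcal E^{\phi}(f)=\int_Z\phi(yf(x))d\rho$, $\mathcal E_D^\phi(f)=\frac1m\sum_i\phi(y_if(x_i))$; $f_\rho^{\phi_h}(x)$ a minimizer over $t$ of $\int_Y\phi_h(yt)d\rho(y|x)$. Tsybakov noise condition with exponent $q\in[0,\infty]$: there is $\hat c_q>0$ with $\rho_X(\{x:|2\eta(x)-1|\le\hat c_qt\})\le t^q$ for all $t>0$. $K$ is a Mercer kernel on $X$ with RKHS $(\mathcal H_K,\|\cdot\|_K)$, $\mathcal B_{K,R}=\{f\in\mathcal H_K:\|f\|_K\le R\}$, $\mathcal N(\mathcal G,\varepsilon)$ the sup-norm covering number in $C(X)$. $f_{D,\lambda}=\arg\min_{f\in\mathcal H_K}\{\frac1m\sum_i\phi_h(y_if(x_i))+\lambda\|f\|_K^2\}$; $\pi f(x)=\max\{-1,\min\{1,f(x)\}\}$. *)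

theory Defs
  imports "HOL-Probability.Probability"
begin

definition unit_cube :: "(real ^ 'd) set" where
  "unit_cube = {x. \<forall>i. 0 \<le> x $ i \<and> x $ i \<le> 1}"

definition hinge :: "real \<Rightarrow> real" where
  "hinge u = max (1 - u) 0"

definition proj1 :: "('a \<Rightarrow> real) \<Rightarrow> 'a \<Rightarrow> real" where
  "proj1 f x = max (-1) (min 1 (f x))"

definition mercer_kernel :: "'a::topological_space set \<Rightarrow> ('a \<Rightarrow> 'a \<Rightarrow> real) \<Rightarrow> bool" where
  "mercer_kernel X K \<longleftrightarrow>
     continuous_on (X \<times> X) (\<lambda>(x, y). K x y) \<and>
     (\<forall>x\<in>X. \<forall>y\<in>X. K x y = K y x) \<and>
     (\<forall>n (c::nat \<Rightarrow> real) xs. (\<forall>i<n. xs i \<in> X) \<longrightarrow>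
        0 \<le> (\<Sum>i<n. \<Sum>j<n. c i * c j * K (xs i) (xs j)))"

text \<open>RKHS norm: for f in H_K, ||f||_K is the supremum of |sum c_i f(x_i)| over all
  g = sum c_i K_{x_i} in the span with ||g||_K^2 = sum c_i c_j K(x_i,x_j) <= 1
  (Riesz / density of the span); f belongs to H_K iff this supremum is finite.
  Functions on X are represented as functions vanishing outside X.\<close>
definition rkhs_vals :: "'a set \<Rightarrow> ('a \<Rightarrow> 'a \<Rightarrow> real) \<Rightarrow> ('a \<Rightarrow> real) \<Rightarrow> real set" where
  "rkhs_vals X K f = {\<bar>\<Sum>i<n. c i * f (xs i)\<bar> | (n::nat) (c::nat \<Rightarrow> real) xs.
      (\<forall>i<n. xs i \<in> X) \<and> (\<Sum>i<n. \<Sum>j<n. c i * c j * K (xs i) (xs j)) \<le> 1}"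

definition in_rkhs :: "'a set \<Rightarrow> ('a \<Rightarrow> 'a \<Rightarrow> real) \<Rightarrow> ('a \<Rightarrow> real) \<Rightarrow> bool" where
  "in_rkhs X K f \<longleftrightarrow> (\<forall>x. x \<notin> X \<longrightarrow> f x = 0) \<and> bdd_above (rkhs_vals X K f)"

definition rkhs_norm :: "'a set \<Rightarrow> ('a \<Rightarrow> 'a \<Rightarrow> real) \<Rightarrow> ('a \<Rightarrow> real) \<Rightarrow> real" where
  "rkhs_norm X K f = Sup (rkhs_vals X K f)"

definition rkhs_ball :: "'a set \<Rightarrow> ('a \<Rightarrow> 'a \<Rightarrow> real) \<Rightarrow> real \<Rightarrow> ('a \<Rightarrow> real) set" where
  "rkhs_ball X K R = {f. in_rkhs X K f \<and> rkhs_norm X K f \<le> R}"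

definition covering_number :: "'a::topological_space set \<Rightarrow> ('a \<Rightarrow> real) set \<Rightarrow> real \<Rightarrow> enat" where
  "covering_number X G eps = Inf {enat (card C) | C. finite C \<and>
      (\<forall>c\<in>C. continuous_on X c) \<and>
      (\<forall>g\<in>G. \<exists>c\<in>C. \<forall>x\<in>X. \<bar>g x - c x\<bar> \<le> eps)}"

definition gen_error :: "('x \<times> real) measure \<Rightarrow> (real \<Rightarrow> real) \<Rightarrow> ('x \<Rightarrow> real) \<Rightarrow> real" where
  "gen_error \<rho> \<phi> f = (\<integral>z. \<phi> (snd z * f (fst z)) \<partial>\<rho>)"

definition emp_error :: "nat \<Rightarrow> (nat \<Rightarrow> 'x \<times> real) \<Rightarrow> (real \<Rightarrow> real) \<Rightarrow> ('x \<Rightarrow> real) \<Rightarrow> real" where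
  "emp_error m D \<phi> f = (\<Sum>i<m. \<phi> (snd (D i) * f (fst (D i)))) / real m"

definition tsybakov :: "'x measure \<Rightarrow> 'x set \<Rightarrow> ('x \<Rightarrow> real) \<Rightarrow> real \<Rightarrow> bool" where
  "tsybakov \<rho>X X \<eta> q \<longleftrightarrow> (\<exists>c>0. \<forall>t>0.
      measure \<rho>X {x\<in>X. \<bar>2 * \<eta> x - 1\<bar> \<le> c * t} \<le> t powr q)"

end

theory Submission
  imports Defs
begin

text \<open>
  For classifiers h with values in [-1, 1] the hinge loss is affine in the label, so the
  excess generalization error of h is the linear functional
  \<integral> (2 \<eta> - 1) (\<pi> f\<rho> - h) d\<rho>X, and, on samples avoiding a null set, the empirical
  excess error is the corresponding average. The sample error of h is thus an average of i.i.d.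
  bounded centred variables, whose variance the Tsybakov condition bounds by
  4 t^q + 2 \<Delta>/(\<kappa> t) for every t > 0, \<Delta> being the excess error of h. Bernstein's inequality
  with t = a^(1/(q+2)) gives for a single h a deviation of at most
  \<gamma> \<Delta> + (4 + 2/(\<kappa> \<gamma>)) a^((q+1)/(q+2)) + 8 a outside an event of probability exp (-m a).
  A union bound over the truncations of a cover of the unit ball at radius \<surd>\<lambda> m^-\<theta>, which
  approximate \<pi> f_{D,\<lambda>} within m^-\<theta> because \<surd>\<lambda> f_{D,\<lambda>} lies in that ball, and the
  hypothesis on C4 finish the argument.
\<close>

section \<open>Bernstein's inequality\<close>

lemma exp_le_one_plus_plus_square:
  fixes u :: real
  assumes "u \<le> 1"
  shows "exp u \<le> 1 + u + u\<^sup>2"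
proof (cases "0 \<le> u")
  case True
  then show ?thesis using exp_bound assms by blast
next
  case False
  have "1 - u \<le> exp (- u)" using exp_ge_add_one_self[of "-u"] by simp
  then have "exp u \<le> 1 / (1 - u)" using False by (simp add: exp_minus field_simps)
  also have "\<dots> \<le> 1 + u + u\<^sup>2"
  proof -
    have "1 \<le> (1 - u) * (1 + u + u\<^sup>2)" using False
      by (simp add: algebra_simps power2_eq_square power3_eq_cube) (rule mult_nonpos_nonneg, simp_all)
    then show ?thesis using False by (simp add: divide_le_eq mult.commute)
  qed
  finally show ?thesis .
qed

lemma integral_exp_le_exp_variance:
  fixes M :: "'a measure" and W :: "'a \<Rightarrow> real"
  assumes "prob_space M" and [measurable]: "W \<in> borel_measurable M"
    and W_le: "\<And>z. z \<in> space M \<Longrightarrow> s * W z \<le> 1"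
    and W_bounded: "\<And>z. z \<in> space M \<Longrightarrow> \<bar>W z\<bar> \<le> B"
    and mean: "integral\<^sup>L M W = 0" and variance: "integral\<^sup>L M (\<lambda>z. (W z)\<^sup>2) \<le> V"
  shows "integral\<^sup>L M (\<lambda>z. exp (s * W z)) \<le> exp (s\<^sup>2 * V)"
proof -
  interpret prob_space M by fact
  have int_W: "integrable M W"
    by (rule integrable_const_bound[where B=B]) (use W_bounded in auto)
  have int_W2: "integrable M (\<lambda>z. (W z)\<^sup>2)"
  proof (rule integrable_const_bound[where B="B\<^sup>2"])
    have "\<bar>W z\<bar>\<^sup>2 \<le> B\<^sup>2" if "z \<in> space M" for z
      using W_bounded[OF that] by (intro power_mono) auto
    then show "AE z in M. norm ((W z)\<^sup>2) \<le> B\<^sup>2" by (auto intro!: AE_I2)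
  qed simp
  have "s * W z \<le> \<bar>s\<bar> * \<bar>B\<bar>" if "z \<in> space M" for z
  proof -
    have "s * W z \<le> \<bar>s\<bar> * \<bar>W z\<bar>" by (metis abs_ge_self abs_mult)
    also have "\<dots> \<le> \<bar>s\<bar> * \<bar>B\<bar>" using W_bounded[OF that] by (intro mult_left_mono) auto
    finally show ?thesis .
  qed
  then have int_exp: "integrable M (\<lambda>z. exp (s * W z))"
    by (intro integrable_const_bound[where B="exp (\<bar>s\<bar> * \<bar>B\<bar>)"] AE_I2) auto
  have "integral\<^sup>L M (\<lambda>z. exp (s * W z)) \<le> integral\<^sup>L M (\<lambda>z. 1 + s * W z + s\<^sup>2 * (W z)\<^sup>2)"
    using int_exp int_W int_W2
  proof (intro integral_mono)
    show "exp (s * W z) \<le> 1 + s * W z + s\<^sup>2 * (W z)\<^sup>2" if "z \<in> space M" for z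
      using exp_le_one_plus_plus_square[OF W_le[OF that]] by (simp add: power_mult_distrib)
  qed auto
  also have "\<dots> = 1 + s\<^sup>2 * integral\<^sup>L M (\<lambda>z. (W z)\<^sup>2)"
    using int_W int_W2 mean by (simp add: prob_space)
  also have "\<dots> \<le> 1 + s\<^sup>2 * V" using variance by (simp add: mult_left_mono)
  also have "\<dots> \<le> exp (s\<^sup>2 * V)" using exp_ge_add_one_self[of "s\<^sup>2 * V"] by simp
  finally show ?thesis .
qed

text \<open>Chernoff's bound at the exponent s = min (1/b) (\<epsilon>/(2V)).\<close>

lemma bernstein_iid_upper_tail:
  fixes M :: "'a measure" and W :: "'a \<Rightarrow> real"
  assumes "prob_space M" and W_meas: "W \<in> borel_measurable M"
    and W_le: "\<And>z. z \<in> space M \<Longrightarrow> W z \<le> b"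
    and W_bounded: "\<And>z. z \<in> space M \<Longrightarrow> \<bar>W z\<bar> \<le> B"
    and mean: "integral\<^sup>L M W = 0" and variance: "integral\<^sup>L M (\<lambda>z. (W z)\<^sup>2) \<le> V"
    and "0 < V" "0 < b" "0 < \<epsilon>"
  shows "measure (PiM {..<m} (\<lambda>_. M))
           {D \<in> space (PiM {..<m} (\<lambda>_. M)). real m * \<epsilon> \<le> (\<Sum>i<m. W (D i))}
         \<le> exp (- (real m * min (\<epsilon> / (2 * b)) (\<epsilon>\<^sup>2 / (4 * V))))"
proof -
  interpret M: prob_space M by fact
  interpret product_prob_space "\<lambda>_. M" "{..<m}" by unfold_locales
  let ?P = "PiM {..<m} (\<lambda>_. M)"
  define s where "s = min (1 / b) (\<epsilon> / (2 * V))"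
  let ?F = "\<lambda>D. \<Prod>i<m. exp (s * W (D i))"
  have s_pos: "0 < s" using assms by (simp add: s_def)
  have [measurable]: "W \<in> borel_measurable M" by (fact W_meas)
  have "s * W z \<le> 1" if "z \<in> space M" for z
  proof -
    have "s * W z \<le> s * b" using W_le[OF that] s_pos by (simp add: mult_left_mono)
    also have "\<dots> \<le> 1" using \<open>0 < b\<close> by (simp add: s_def min_def field_simps)
    finally show ?thesis .
  qed
  then have mgf: "integral\<^sup>L M (\<lambda>z. exp (s * W z)) \<le> exp (s\<^sup>2 * V)"
    using assms by (intro integral_exp_le_exp_variance) auto
  have int_exp: "integrable M (\<lambda>z. exp (s * W z))"
    using W_bounded s_pos
    by (intro M.integrable_const_bound[where B="exp (s * B)"] AE_I2) (auto simp: abs_le_iff)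
  have "{D \<in> space ?P. real m * \<epsilon> \<le> (\<Sum>i<m. W (D i))}
        = {D \<in> space ?P. exp (s * (real m * \<epsilon>)) \<le> ?F D}"
    using s_pos by (auto simp: exp_sum[symmetric] simp flip: sum_distrib_left)
  also have "measure ?P \<dots> \<le> integral\<^sup>L ?P ?F / exp (s * (real m * \<epsilon>))"
    by (rule integral_Markov_inequality_measure[where A="space ?P"])
       (use product_integrable_prod[of "{..<m}" "\<lambda>_ z. exp (s * W z)"] int_exp
        in \<open>auto intro!: AE_I2 prod_nonneg\<close>)
  also have "integral\<^sup>L ?P ?F = (integral\<^sup>L M (\<lambda>z. exp (s * W z))) ^ m"
    using product_integral_prod[of "{..<m}" "\<lambda>_ z. exp (s * W z)"] int_exp by simp
  also have "\<dots> / exp (s * (real m * \<epsilon>)) \<le> exp (s\<^sup>2 * V) ^ m / exp (s * (real m * \<epsilon>))"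
    by (intro divide_right_mono power_mono mgf) simp_all
  also have "\<dots> = exp (real m * (s * (s * V) - s * \<epsilon>))"
    by (simp add: exp_of_nat_mult[symmetric] exp_diff[symmetric] algebra_simps power2_eq_square)
  also have "\<dots> \<le> exp (real m * (- (s * \<epsilon> / 2)))"
  proof -
    have "s * V \<le> \<epsilon> / 2" using \<open>0 < V\<close> by (simp add: s_def min_def field_simps)
    then have "s * (s * V) \<le> s * (\<epsilon> / 2)" using s_pos by (intro mult_left_mono) auto
    then have "s * (s * V) - s * \<epsilon> \<le> - (s * \<epsilon> / 2)" by (simp add: algebra_simps)
    then show ?thesis by (intro exp_mono mult_left_mono) simp_all
  qed
  also have "s * \<epsilon> / 2 = min (\<epsilon> / (2 * b)) (\<epsilon>\<^sup>2 / (4 * V))"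
    using assms by (simp add: s_def min_def field_simps power2_eq_square)
  finally show ?thesis by simp
qed

lemma measurable_fst_borel [measurable]:
  "fst \<in> (borel :: ('a::second_countable_topology \<times> 'b::second_countable_topology) measure) \<rightarrow>\<^sub>M borel"
  using measurable_fst[of "borel :: 'a measure" "borel :: 'b measure"] by (simp add: borel_prod)

lemma measurable_snd_borel [measurable]:
  "snd \<in> (borel :: ('a::second_countable_topology \<times> 'b::second_countable_topology) measure) \<rightarrow>\<^sub>M borel"
  using measurable_snd[of "borel :: 'a measure" "borel :: 'b measure"] by (simp add: borel_prod)

lemma vimage_fst_in_sets_borel [measurable]:
  "A \<in> sets borel \<Longrightarrow>
     fst -` (A :: 'a::second_countable_topology set) \<in> sets (borel :: ('a \<times> 'b::second_countable_topology) measure)"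
  using measurable_sets[OF measurable_fst_borel, of A] by simp

lemma Times_in_sets_borel [measurable]:
  fixes A :: "'a::second_countable_topology set" and B :: "'b::second_countable_topology set"
  assumes "A \<in> sets borel" "B \<in> sets borel"
  shows "A \<times> B \<in> sets borel"
  using pair_measureI[OF assms] by (metis borel_prod)

lemma closed_unit_cube: "closed (unit_cube :: (real ^ 'd) set)"
  unfolding unit_cube_def
  by (simp add: closed_Collect_all closed_Collect_conj closed_Collect_le continuous_on_component)

lemma unit_cube_in_sets_borel [measurable]: "(unit_cube :: (real ^ 'd) set) \<in> sets borel"
  using closed_unit_cube by (rule borel_closed)

lemma borel_measurable_hinge [measurable]: "hinge \<in> borel_measurable borel"
  unfolding hinge_def[abs_def] by measurable

lemma borel_measurable_proj1 [measurable]: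
  assumes [measurable]: "g \<in> borel_measurable M"
  shows "proj1 g \<in> borel_measurable M"
  unfolding proj1_def[abs_def] by measurable

lemma abs_mult_le_of_abs_le_one:
  fixes a b :: real
  shows "\<bar>a\<bar> \<le> 1 \<Longrightarrow> \<bar>b\<bar> \<le> B \<Longrightarrow> \<bar>a * b\<bar> \<le> B"
  by (simp add: abs_mult) (meson abs_ge_zero mult_left_le_one_le order_trans)

lemma abs_proj1_le_one: "\<bar>proj1 f x\<bar> \<le> 1"
  by (simp add: proj1_def)

lemma abs_proj1_diff_le: "\<bar>proj1 f x - proj1 g x\<bar> \<le> \<bar>f x - g x\<bar>"
  by (simp add: proj1_def)

lemma borel_measurable_uniform_approx:
  fixes f :: "'a::topological_space \<Rightarrow> real"
  assumes X: "X \<in> sets borel" and zero: "\<And>x. x \<notin> X \<Longrightarrow> f x = 0"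
    and approx: "\<And>e. e > 0 \<Longrightarrow> \<exists>g. continuous_on X g \<and> (\<forall>x\<in>X. \<bar>f x - g x\<bar> \<le> e)"
  shows "f \<in> borel_measurable borel"
proof -
  obtain g where g_cont: "\<And>n. continuous_on X (g n)"
    and g_close: "\<And>n x. x \<in> X \<Longrightarrow> \<bar>f x - g n x\<bar> \<le> inverse (real (Suc n))"
    using approx[of "inverse (real (Suc _))"] by (metis inverse_positive_iff_positive of_nat_0_less_iff zero_less_Suc)
  define u where "u n x = (if x \<in> X then g n x else 0)" for n x
  have "(\<lambda>n. u n x) \<longlonglongrightarrow> f x" for x
  proof (cases "x \<in> X")
    case True
    have "(\<lambda>n. f x - u n x) \<longlonglongrightarrow> 0"
      by (rule Lim_null_comparison[OF _ LIMSEQ_inverse_real_of_nat])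
         (use g_close[OF True] True in \<open>simp add: u_def\<close>)
    then have "(\<lambda>n. f x - (f x - u n x)) \<longlonglongrightarrow> f x - 0" by (intro tendsto_diff tendsto_const)
    then show ?thesis by simp
  qed (simp add: u_def zero)
  moreover have "u n \<in> borel_measurable borel" for n
    unfolding u_def[abs_def] by (rule borel_measurable_continuous_on_if) (auto intro: X g_cont)
  ultimately show ?thesis by (rule borel_measurable_LIMSEQ_real)
qed

section \<open>Balls of the reproducing kernel Hilbert space\<close>

lemma zero_in_rkhs_vals: "0 \<in> rkhs_vals X K f"
  unfolding rkhs_vals_def by (rule CollectI, rule exI[of _ 0]) auto

lemma rkhs_vals_zero: "rkhs_vals X K (\<lambda>_. 0) = {0}"
  using zero_in_rkhs_vals[of X K "\<lambda>_. 0"] by (auto simp: rkhs_vals_def)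

lemma in_rkhs_zero: "in_rkhs X K (\<lambda>_. 0)"
  by (simp add: in_rkhs_def rkhs_vals_zero)

lemma rkhs_norm_zero: "rkhs_norm X K (\<lambda>_. 0) = 0"
  by (simp add: rkhs_norm_def rkhs_vals_zero)

lemma zero_in_rkhs_ball: "0 \<le> R \<Longrightarrow> (\<lambda>_. 0) \<in> rkhs_ball X K R"
  by (simp add: rkhs_ball_def in_rkhs_zero rkhs_norm_zero)

lemma scaled_in_rkhs_ball:
  assumes f: "in_rkhs X K f" and a: "0 \<le> a" and norm: "a * rkhs_norm X K f \<le> 1"
  shows "(\<lambda>x. a * f x) \<in> rkhs_ball X K 1"
proof -
  have le: "v \<le> 1" if mem: "v \<in> rkhs_vals X K (\<lambda>x. a * f x)" for v
  proof -
    obtain n :: nat and c xs where v: "v = \<bar>\<Sum>i<n. c i * (a * f (xs i))\<bar>"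
      and "\<forall>i<n. xs i \<in> X" and "(\<Sum>i<n. \<Sum>j<n. c i * c j * K (xs i) (xs j)) \<le> 1"
      using mem unfolding rkhs_vals_def by blast
    then have "\<bar>\<Sum>i<n. c i * f (xs i)\<bar> \<in> rkhs_vals X K f"
      unfolding rkhs_vals_def by blast
    then have "\<bar>\<Sum>i<n. c i * f (xs i)\<bar> \<le> rkhs_norm X K f"
      unfolding rkhs_norm_def using f by (auto simp: in_rkhs_def intro: cSup_upper)
    moreover have "v = a * \<bar>\<Sum>i<n. c i * f (xs i)\<bar>"
    proof -
      have "(\<Sum>i<n. c i * (a * f (xs i))) = a * (\<Sum>i<n. c i * f (xs i))"
        by (simp add: sum_distrib_left algebra_simps)
      then show ?thesis using a by (simp add: v abs_mult)
    qed
    ultimately have "v \<le> a * rkhs_norm X K f" using a by (simp add: mult_left_mono)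
    then show ?thesis using norm by simp
  qed
  then have "rkhs_norm X K (\<lambda>x. a * f x) \<le> 1"
    unfolding rkhs_norm_def by (intro cSup_least) (auto intro: zero_in_rkhs_vals)
  moreover have "in_rkhs X K (\<lambda>x. a * f x)"
    using f le unfolding in_rkhs_def by (auto simp: bdd_above_def)
  ultimately show ?thesis by (simp add: rkhs_ball_def)
qed

lemma covering_number_finiteE:
  assumes "covering_number X G \<epsilon> < \<infinity>"
  obtains C where "finite C" "\<forall>c\<in>C. continuous_on X c"
    "\<forall>g\<in>G. \<exists>c\<in>C. \<forall>x\<in>X. \<bar>g x - c x\<bar> \<le> \<epsilon>"
    "enat (card C) = covering_number X G \<epsilon>"
proof -
  define S where "S = {enat (card C) | C. finite C \<and> (\<forall>c\<in>C. continuous_on X c) \<and>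
      (\<forall>g\<in>G. \<exists>c\<in>C. \<forall>x\<in>X. \<bar>g x - c x\<bar> \<le> \<epsilon>)}"
  have cn: "covering_number X G \<epsilon> = Inf S" by (simp add: covering_number_def S_def)
  then have "S \<noteq> {}" using assms by (auto simp: Inf_enat_def)
  then have "Inf S \<in> S" unfolding Inf_enat_def by (auto intro: LeastI)
  then obtain C where "Inf S = enat (card C)" "finite C" "\<forall>c\<in>C. continuous_on X c"
    "\<forall>g\<in>G. \<exists>c\<in>C. \<forall>x\<in>X. \<bar>g x - c x\<bar> \<le> \<epsilon>"
    unfolding S_def by blast
  then show ?thesis using that cn by metis
qed

lemma borel_measurable_rkhs_ball:
  assumes X: "X \<in> sets borel" and cover: "\<And>\<epsilon>. 0 < \<epsilon> \<Longrightarrow> covering_number X (rkhs_ball X K 1) \<epsilon> < \<infinity>"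
    and g: "g \<in> rkhs_ball X K 1"
  shows "g \<in> borel_measurable borel"
proof (rule borel_measurable_uniform_approx[OF X])
  show "g x = 0" if "x \<notin> X" for x using g that by (simp add: rkhs_ball_def in_rkhs_def)
  fix e :: real assume "0 < e"
  then obtain C where "\<forall>c\<in>C. continuous_on X c" "\<forall>g\<in>rkhs_ball X K 1. \<exists>c\<in>C. \<forall>x\<in>X. \<bar>g x - c x\<bar> \<le> e"
    using cover by (metis covering_number_finiteE)
  then show "\<exists>c. continuous_on X c \<and> (\<forall>x\<in>X. \<bar>g x - c x\<bar> \<le> e)" using g by blast
qed

lemma borel_measurable_of_scaled_in_rkhs_ball:
  assumes "X \<in> sets borel" "\<And>\<epsilon>. 0 < \<epsilon> \<Longrightarrow> covering_number X (rkhs_ball X K 1) \<epsilon> < \<infinity>"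
    and "0 < c" "(\<lambda>x. c * f x) \<in> rkhs_ball X K 1"
  shows "f \<in> borel_measurable borel"
proof -
  have "(\<lambda>x. c * f x) \<in> borel_measurable borel" using assms by (intro borel_measurable_rkhs_ball)
  then have "(\<lambda>x. (1 / c) * (c * f x)) \<in> borel_measurable borel" by measurable
  then show ?thesis using \<open>0 < c\<close> by simp
qed

lemma regularized_minimizer_in_rkhs_ball:
  assumes "0 < m" "0 < lam" and f: "in_rkhs X K f"
    and min: "emp_error m D hinge f + lam * (rkhs_norm X K f)\<^sup>2
              \<le> emp_error m D hinge (\<lambda>_. 0) + lam * (rkhs_norm X K (\<lambda>_. 0))\<^sup>2"
  shows "(\<lambda>x. sqrt lam * f x) \<in> rkhs_ball X K 1"
proof (rule scaled_in_rkhs_ball[OF f])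
  have "emp_error m D hinge (\<lambda>_. 0) = 1" using \<open>0 < m\<close> by (simp add: emp_error_def hinge_def)
  moreover have "0 \<le> emp_error m D hinge f" by (simp add: emp_error_def hinge_def sum_nonneg)
  ultimately have "(sqrt lam * rkhs_norm X K f)\<^sup>2 \<le> 1\<^sup>2"
    using min \<open>0 < lam\<close> by (simp add: rkhs_norm_zero power_mult_distrib)
  then show "sqrt lam * rkhs_norm X K f \<le> 1" by (rule power2_le_imp_le) simp
qed (use \<open>0 < lam\<close> in simp)

lemma abs_proj1_diff_le_rescaled:
  assumes "0 < c" "0 \<le> \<epsilon>" and zero: "x \<notin> X \<Longrightarrow> f x = 0"
    and close: "x \<in> X \<Longrightarrow> \<bar>c * f x - u x\<bar> \<le> c * \<epsilon>"
  shows "\<bar>proj1 f x - proj1 (\<lambda>x. if x \<in> X then u x / c else 0) x\<bar> \<le> \<epsilon>"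
proof (cases "x \<in> X")
  case True
  have "\<bar>proj1 f x - proj1 (\<lambda>x. if x \<in> X then u x / c else 0) x\<bar> \<le> \<bar>f x - u x / c\<bar>"
    using abs_proj1_diff_le[of f x "\<lambda>x. if x \<in> X then u x / c else 0"] True by simp
  also have "\<dots> = \<bar>c * f x - u x\<bar> / c" using \<open>0 < c\<close> by (simp add: field_simps)
  also have "\<dots> \<le> \<epsilon>" using close True \<open>0 < c\<close> by (simp add: divide_le_eq mult.commute)
  finally show ?thesis .
qed (use zero \<open>0 \<le> \<epsilon>\<close> in \<open>simp add: proj1_def\<close>)

text \<open>Truncation is 1-Lipschitz, so truncating a cover of the rescaled ball yields a net
  for the truncated functions.\<close>

lemma truncated_rkhs_net:
  fixes X :: "'a::topological_space set"
  assumes X: "X \<in> sets borel" and c: "0 < c" and \<epsilon>: "0 \<le> \<epsilon>"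
    and cover: "covering_number X (rkhs_ball X K 1) (c * \<epsilon>) < \<infinity>"
  obtains H where "finite H" "H \<noteq> {}"
    "card H \<le> the_enat (covering_number X (rkhs_ball X K 1) (c * \<epsilon>))"
    "\<And>h. h \<in> H \<Longrightarrow> h \<in> borel_measurable borel" "\<And>h x. h \<in> H \<Longrightarrow> \<bar>h x\<bar> \<le> 1"
    "\<And>f. (\<lambda>x. c * f x) \<in> rkhs_ball X K 1 \<Longrightarrow> \<exists>h\<in>H. \<forall>x. \<bar>proj1 f x - h x\<bar> \<le> \<epsilon>"
proof -
  obtain C where "finite C" and C_cont: "\<forall>u\<in>C. continuous_on X u"
    and C_cover: "\<forall>g\<in>rkhs_ball X K 1. \<exists>u\<in>C. \<forall>x\<in>X. \<bar>g x - u x\<bar> \<le> c * \<epsilon>"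
    and C_card: "enat (card C) = covering_number X (rkhs_ball X K 1) (c * \<epsilon>)"
    using covering_number_finiteE[OF cover] by blast
  define trunc where "trunc u = proj1 (\<lambda>x. if x \<in> X then u x / c else 0)" for u
  have trunc_meas: "trunc u \<in> borel_measurable borel" if "u \<in> C" for u
    unfolding trunc_def using c C_cont that
    by (intro borel_measurable_proj1 borel_measurable_continuous_on_if X)
       (auto intro!: continuous_intros)
  have trunc_close: "\<forall>x. \<bar>proj1 f x - trunc u x\<bar> \<le> \<epsilon>"
    if f: "(\<lambda>x. c * f x) \<in> rkhs_ball X K 1" and u: "\<forall>x\<in>X. \<bar>c * f x - u x\<bar> \<le> c * \<epsilon>" for f u
    unfolding trunc_def using f u c \<epsilon>
    by (intro allI abs_proj1_diff_le_rescaled) (auto simp: rkhs_ball_def in_rkhs_def)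
  show ?thesis
  proof (rule that[of "trunc ` C"])
    show "finite (trunc ` C)" using \<open>finite C\<close> by simp
    show "trunc ` C \<noteq> {}" using C_cover zero_in_rkhs_ball[of 1 X K] by auto
    show "card (trunc ` C) \<le> the_enat (covering_number X (rkhs_ball X K 1) (c * \<epsilon>))"
      using card_image_le[OF \<open>finite C\<close>, of trunc] C_card by (metis the_enat.simps)
    show "h \<in> borel_measurable borel" "\<bar>h x\<bar> \<le> 1" if "h \<in> trunc ` C" for h x
      using that trunc_meas by (auto simp: trunc_def abs_proj1_le_one)
    show "\<exists>h\<in>trunc ` C. \<forall>x. \<bar>proj1 f x - h x\<bar> \<le> \<epsilon>"
      if "(\<lambda>x. c * f x) \<in> rkhs_ball X K 1" for f
      using bspec[OF C_cover that] trunc_close[OF that] by blast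
  qed
qed

definition hinge_risk :: "real \<Rightarrow> real \<Rightarrow> real" where
  "hinge_risk e t = e * hinge t + (1 - e) * hinge (- t)"

lemma hinge_risk_flip: "hinge_risk (1 - e) (- t) = hinge_risk e t"
  by (simp add: hinge_risk_def)

lemma hinge_risk_minimizer_ge_one:
  assumes "1/2 < e" "e \<le> 1" and min: "\<And>t. hinge_risk e f \<le> hinge_risk e t"
  shows "1 \<le> f"
proof (rule ccontr)
  assume "\<not> 1 \<le> f"
  have le: "hinge_risk e f \<le> 2 * (1 - e)" using min[of 1] by (simp add: hinge_risk_def hinge_def)
  show False
  proof (cases "f < -1")
    case True
    then have "e * 2 \<le> e * (1 - f)" using assms by (intro mult_left_mono) auto
    with le True show False using assms by (simp add: hinge_risk_def hinge_def)
  next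
    case False
    have "0 < (2 * e - 1) * (1 - f)" using assms \<open>\<not> 1 \<le> f\<close> by (intro mult_pos_pos) auto
    with le False \<open>\<not> 1 \<le> f\<close> show False by (simp add: hinge_risk_def hinge_def algebra_simps)
  qed
qed

lemma hinge_risk_minimizer_le_neg_one:
  assumes "0 \<le> e" "e < 1/2" and min: "\<And>t. hinge_risk e f \<le> hinge_risk e t"
  shows "f \<le> -1"
  using hinge_risk_minimizer_ge_one[of "1 - e" "- f"] assms
  by (simp add: hinge_risk_flip[of e, symmetric]) (metis hinge_risk_flip minus_minus)

lemma hinge_risk_minimizer_gt_one:
  assumes "e \<le> 1" "1 < f" and min: "\<And>t. hinge_risk e f \<le> hinge_risk e t"
  shows "e = 1"
proof (rule ccontr)
  assume "e \<noteq> 1"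
  have "(1 - e) * (1 + f) \<le> (1 - e) * 2"
    using min[of 1] \<open>1 < f\<close> by (simp add: hinge_risk_def hinge_def)
  moreover have "0 < 1 - e" using assms \<open>e \<noteq> 1\<close> by simp
  ultimately have "1 + f \<le> 2" by (meson mult_le_cancel_left_pos)
  with \<open>1 < f\<close> show False by simp
qed

lemma hinge_risk_minimizer_lt_neg_one:
  assumes "0 \<le> e" "f < -1" and min: "\<And>t. hinge_risk e f \<le> hinge_risk e t"
  shows "e = 0"
  using hinge_risk_minimizer_gt_one[of "1 - e" "- f"] assms
  by (simp add: hinge_risk_flip[of e, symmetric]) (metis hinge_risk_flip minus_minus)

lemma sqrt_tsybakov_variance_le:
  fixes q a c D \<gamma> :: real
  assumes q: "0 < q" and a: "0 < a" and c: "0 < c" and D: "0 \<le> D" and \<gamma>: "0 < \<gamma>"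
  defines "t \<equiv> a powr (1 / (q + 2))"
  shows "2 * sqrt ((4 * t powr q + 2 * D / (c * t)) * a)
           \<le> \<gamma> * D + (4 + 2 / (c * \<gamma>)) * a powr ((q + 1) / (q + 2))"
proof -
  define p where "p = (q + 1) / (q + 2)"
  have t: "0 < t" using a by (simp add: t_def)
  have "t powr q * a = a powr (q / (q + 2) + 1)"
    using a q by (simp add: t_def powr_powr powr_add)
  also have "q / (q + 2) + 1 = p + p" using q by (simp add: p_def add_divide_distrib[symmetric] divide_simps)
  also have "a powr (p + p) = (a powr p)\<^sup>2" by (simp only: powr_add power2_eq_square)
  finally have sqrt_first: "sqrt (4 * (t powr q * a)) = 2 * a powr p"
    by (simp add: real_sqrt_mult)
  have "a / t = a powr (1 - 1 / (q + 2))" using a by (simp add: t_def powr_diff)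
  also have "1 - 1 / (q + 2) = p" using q by (simp add: p_def field_simps)
  finally have "sqrt (D * (2 * (a / t) / c)) = sqrt ((\<gamma> * D) * (2 * a powr p / (c * \<gamma>)))"
    using \<gamma> by (simp add: field_simps)
  also have "\<dots> \<le> ((\<gamma> * D) + (2 * a powr p / (c * \<gamma>))) / 2"
    using \<gamma> D c a by (intro arith_geo_mean_sqrt) auto
  finally have sqrt_second: "sqrt (D * (2 * (a / t) / c)) \<le> \<dots>" .
  have "sqrt ((4 * t powr q + 2 * D / (c * t)) * a) = sqrt (4 * (t powr q * a) + D * (2 * (a / t) / c))"
    by (simp add: algebra_simps)
  also have "\<dots> \<le> sqrt (4 * (t powr q * a)) + sqrt (D * (2 * (a / t) / c))"
    using t a c D by (intro sqrt_add_le_add_sqrt) auto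
  finally show ?thesis using sqrt_first sqrt_second by (simp add: p_def field_simps)
qed

lemma one_le_ln_four_div:
  fixes \<delta> :: real
  assumes "0 < \<delta>" "\<delta> < 1"
  shows "1 \<le> ln (4 / \<delta>)"
proof -
  have "exp 1 \<le> (3::real)" by (rule exp_le)
  also have "3 \<le> 4 / \<delta>" using assms by (simp add: le_divide_eq)
  finally show ?thesis using assms by (subst ln_ge_iff) auto
qed

lemma ln_union_bound_le:
  fixes \<delta> N L :: real
  assumes "0 < \<delta>" "\<delta> < 1" "1 \<le> N" "ln N \<le> L" "0 \<le> L"
  shows "ln (2 * N / \<delta>) \<le> (L + 1) * ln (4 / \<delta>)"
proof -
  have "ln (2 * N / \<delta>) = ln (N * (2 / \<delta>))" by (simp add: mult.commute)
  also have "\<dots> = ln N + ln (2 / \<delta>)" using assms by (intro ln_mult_pos) auto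
  also have "ln (2 / \<delta>) \<le> ln (4 / \<delta>)" using assms by (simp add: divide_right_mono)
  also have "ln N + ln (4 / \<delta>) \<le> L * ln (4 / \<delta>) + ln (4 / \<delta>)"
    using assms mult_left_mono[OF one_le_ln_four_div[OF assms(1,2)], of L] by simp
  finally show ?thesis by (simp add: algebra_simps)
qed

lemma powr_mult_le:
  fixes x \<Lambda> p :: real
  assumes "0 \<le> x" "1 \<le> \<Lambda>" "p \<le> 1"
  shows "(x * \<Lambda>) powr p \<le> x powr p * \<Lambda>"
proof -
  have "\<Lambda> powr p \<le> \<Lambda> powr 1" using assms by (intro powr_mono) auto
  then show ?thesis using assms by (simp add: powr_mult mult_left_mono)
qed

lemma deviation_rate_le:
  fixes a r \<Lambda> \<epsilon> c K C p \<gamma> Df Ef :: real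
  assumes a: "0 < a" "a \<le> r * \<Lambda>" and r: "0 \<le> r" and \<Lambda>: "1 \<le> \<Lambda>" and p: "0 < p" "p \<le> 1"
    and c: "0 < c" "c * \<epsilon> \<le> r powr p" and K: "0 \<le> K" and \<gamma>: "0 \<le> \<gamma>"
    and C: "4 \<le> C" "(\<gamma> + 2) / c + K + 8 \<le> C"
    and deviation: "Df - Ef \<le> \<gamma> * Df + (\<gamma> + 2) * \<epsilon> + K * a powr p + 8 * a"
    and bounded: "0 \<le> \<gamma> * Df" "Df - Ef \<le> 4"
  shows "Df - Ef \<le> \<gamma> * Df + C * r powr p * \<Lambda>"
proof -
  define B where "B = r powr p * \<Lambda>"
  have "a powr p \<le> (r * \<Lambda>) powr p" using a p by (intro powr_mono2) auto
  also have "\<dots> \<le> B" unfolding B_def using r \<Lambda> p(2) by (rule powr_mult_le)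
  finally have aB: "a powr p \<le> B" .
  show ?thesis
  proof (cases "a \<le> 1")
    case True
    have "a = a powr 1" using a by simp
    also have "\<dots> \<le> a powr p" using a True p by (intro powr_mono') auto
    finally have "8 * a \<le> 8 * B" using aB by simp
    moreover have "K * a powr p \<le> K * B" using aB K by (rule mult_left_mono)
    moreover have "(\<gamma> + 2) * \<epsilon> \<le> (\<gamma> + 2) * (B / c)"
    proof (intro mult_left_mono)
      have "r powr p \<le> B" using \<Lambda> by (simp add: B_def mult_le_cancel_left1)
      then show "\<epsilon> \<le> B / c" using c by (simp add: le_divide_eq mult.commute)
    qed (use \<gamma> in simp)
    moreover have "((\<gamma> + 2) / c + K + 8) * B \<le> C * B"
      using C \<Lambda> by (intro mult_right_mono) (auto simp: B_def)
    ultimately show ?thesis using deviation by (simp add: B_def algebra_simps)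
  next
    case False
    then have "1 \<le> B" using aB p ge_one_powr_ge_zero[of a p] by simp
    then have "4 \<le> C * B" using C mult_mono[of 4 C 1 B] by simp
    then show ?thesis using bounded by (simp add: B_def mult.assoc)
  qed
qed

section \<open>Excess hinge risk of classifiers with values in [-1, 1]\<close>

locale hinge_classification =
  fixes \<rho> :: "((real ^ 'd) \<times> real) measure"
    and \<eta> :: "real ^ 'd \<Rightarrow> real"
    and f\<rho> :: "real ^ 'd \<Rightarrow> real"
  assumes prob: "prob_space \<rho>"
    and sets_\<rho>: "sets \<rho> = sets borel"
    and support: "measure \<rho> (unit_cube \<times> {-1, 1}) = 1"
    and \<eta>_meas [measurable]: "\<eta> \<in> borel_measurable borel"
    and \<eta>_range: "\<forall>x\<in>unit_cube. 0 \<le> \<eta> x \<and> \<eta> x \<le> 1"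
    and \<eta>_cond: "\<forall>A\<in>sets borel. measure \<rho> (A \<times> {1}) =
                   (\<integral>x. indicator A x * \<eta> x \<partial>(distr \<rho> borel fst))"
    and f\<rho>_meas [measurable]: "f\<rho> \<in> borel_measurable borel"
    and f\<rho>_min: "\<forall>x\<in>unit_cube. \<forall>t.
                   \<eta> x * hinge (f\<rho> x) + (1 - \<eta> x) * hinge (- f\<rho> x)
                     \<le> \<eta> x * hinge t + (1 - \<eta> x) * hinge (- t)"
begin

sublocale prob_space \<rho> by (fact prob)

definition \<rho>X :: "(real ^ 'd) measure" where "\<rho>X = distr \<rho> borel fst"

definition bayes :: "real ^ 'd \<Rightarrow> real" where "bayes = proj1 f\<rho>"

text \<open>The label read as an element of {-1, 1} everywhere, not only almost surely.\<close>
definition label :: "(real ^ 'd) \<times> real \<Rightarrow> real" where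
  "label z = (if snd z = 1 then 1 else -1)"

lemma space_\<rho>: "space \<rho> = UNIV"
  using sets_eq_imp_space_eq[OF sets_\<rho>] by simp

lemma measurable_\<rho> [measurable_cong]: "measurable \<rho> N = measurable borel N"
  by (rule measurable_cong_sets[OF sets_\<rho> refl])

lemma measurable_fst_\<rho> [measurable]: "fst \<in> \<rho> \<rightarrow>\<^sub>M borel"
  by (simp add: measurable_\<rho>)

sublocale X: prob_space \<rho>X
  unfolding \<rho>X_def by (rule prob_space_distr) (simp add: measurable_\<rho>)

lemma sets_\<rho>X [measurable_cong]: "sets \<rho>X = sets borel"
  by (simp add: \<rho>X_def)

lemma measurable_\<rho>X [measurable_cong]: "measurable \<rho>X N = measurable borel N"
  by (rule measurable_cong_sets[OF sets_\<rho>X refl])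

lemma AE_support: "AE z in \<rho>. z \<in> unit_cube \<times> {-1, 1}"
  by (rule AE_prob_1) (fact support)

lemma AE_unit_cube: "AE x in \<rho>X. x \<in> unit_cube"
proof (rule X.AE_prob_1)
  have "measure \<rho> (unit_cube \<times> {-1, 1}) \<le> measure \<rho> (fst -` unit_cube \<inter> space \<rho>)"
    by (intro finite_measure_mono) (auto simp: space_\<rho> sets_\<rho>)
  also have "\<dots> = measure \<rho>X unit_cube"
    unfolding \<rho>X_def by (rule measure_distr[symmetric]) (auto simp: measurable_\<rho>)
  finally show "measure \<rho>X unit_cube = 1" using support X.prob_le_1 by (simp add: antisym)
qed

lemma integral_fst_eq:
  fixes w :: "real ^ 'd \<Rightarrow> real"
  assumes [measurable]: "w \<in> borel_measurable borel"
  shows "(\<integral>z. w (fst z) \<partial>\<rho>) = (\<integral>x. w x \<partial>\<rho>X)"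
  unfolding \<rho>X_def by (rule integral_distr[OF measurable_fst_\<rho> assms, symmetric])

lemma integrable_\<rho>_bounded:
  fixes f :: "_ \<Rightarrow> real"
  assumes "f \<in> borel_measurable borel" "\<And>z. \<bar>f z\<bar> \<le> B"
  shows "integrable \<rho> f"
  using assms by (intro integrable_const_bound[where B=B]) (auto simp: measurable_\<rho>)

lemma integrable_\<rho>X_bounded:
  fixes f :: "_ \<Rightarrow> real"
  assumes "f \<in> borel_measurable borel" "\<And>x. x \<in> unit_cube \<Longrightarrow> \<bar>f x\<bar> \<le> B"
  shows "integrable \<rho>X f"
proof (rule X.integrable_const_bound[where B=B])
  show "AE x in \<rho>X. norm (f x) \<le> B" using AE_unit_cube by eventually_elim (simp add: assms(2))
qed (use assms(1) in \<open>simp add: measurable_\<rho>X\<close>)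

lemma abs_two_\<eta>_minus_one_le: "x \<in> unit_cube \<Longrightarrow> \<bar>2 * \<eta> x - 1\<bar> \<le> 1"
  using \<eta>_range by auto

lemma distr_label_one_eq_density:
  "distr (density \<rho> (\<lambda>z. ennreal (indicator (UNIV \<times> {1}) z))) borel fst
     = density \<rho>X (\<lambda>x. indicator unit_cube x * \<eta> x)"
proof (rule measure_eqI)
  fix A assume "A \<in> sets (distr (density \<rho> (\<lambda>z. ennreal (indicator (UNIV \<times> {1}) z))) borel fst)"
  then have A [measurable]: "A \<in> sets borel" by simp
  have "emeasure (distr (density \<rho> (\<lambda>z. ennreal (indicator (UNIV \<times> {1}) z))) borel fst) A
      = (\<integral>\<^sup>+z\<in>fst -` A. ennreal (indicator (UNIV \<times> {1}) z) \<partial>\<rho>)"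
    using vimage_fst_in_sets_borel[OF A]
    by (simp add: emeasure_distr emeasure_density measurable_\<rho> space_\<rho> sets_\<rho>)
  also have "\<dots> = (\<integral>\<^sup>+z. indicator (A \<times> {1}) z \<partial>\<rho>)"
    by (auto intro!: nn_integral_cong split: split_indicator)
  also have "\<dots> = emeasure \<rho> (A \<times> {1})" by (simp add: sets_\<rho>)
  also have "\<dots> = ennreal (\<integral>x. indicator A x * \<eta> x \<partial>\<rho>X)"
    using \<eta>_cond A by (simp add: emeasure_eq_measure \<rho>X_def)
  also have "(\<integral>x. indicator A x * \<eta> x \<partial>\<rho>X) = (\<integral>x. indicator A x * (indicator unit_cube x * \<eta> x) \<partial>\<rho>X)"
    by (intro integral_cong_AE) (use AE_unit_cube in \<open>auto simp: indicator_def\<close>)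
  also have "\<dots> = (\<integral>\<^sup>+x. ennreal (indicator A x * (indicator unit_cube x * \<eta> x)) \<partial>\<rho>X)"
    using \<eta>_range
    by (intro nn_integral_eq_integral[symmetric] integrable_\<rho>X_bounded[where B=1])
       (auto simp: indicator_def)
  also have "\<dots> = emeasure (density \<rho>X (\<lambda>x. indicator unit_cube x * \<eta> x)) A"
    using \<eta>_range by (auto simp: emeasure_density sets_\<rho>X ennreal_mult' indicator_def intro!: nn_integral_cong)
  finally show "emeasure (distr (density \<rho> (\<lambda>z. ennreal (indicator (UNIV \<times> {1}) z))) borel fst) A = \<dots>" .
qed (simp add: sets_\<rho>X)

lemma integral_label_one:
  fixes w :: "real ^ 'd \<Rightarrow> real"
  assumes [measurable]: "w \<in> borel_measurable borel"
  shows "(\<integral>z. indicator (UNIV \<times> {1}) z * w (fst z) \<partial>\<rho>) = (\<integral>x. indicator unit_cube x * \<eta> x * w x \<partial>\<rho>X)"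
proof -
  have "(\<integral>z. indicator (UNIV \<times> {1}) z * w (fst z) \<partial>\<rho>)
      = integral\<^sup>L (distr (density \<rho> (\<lambda>z. ennreal (indicator (UNIV \<times> {1}) z))) borel fst) w"
    by (simp add: integral_distr measurable_\<rho>) (subst integral_density, auto simp: measurable_\<rho>)
  also have "\<dots> = (\<integral>x. indicator unit_cube x * \<eta> x * w x \<partial>\<rho>X)"
    unfolding distr_label_one_eq_density
    using \<eta>_range by (subst integral_density) (auto simp: measurable_\<rho>X indicator_def)
  finally show ?thesis .
qed

lemma label_eq: "label z = 2 * indicator (UNIV \<times> {1}) z - 1"
  by (simp add: label_def indicator_def mem_Times_iff)

lemma borel_measurable_label [measurable]: "label \<in> borel_measurable borel"
  unfolding label_eq[abs_def] by measurable

lemma abs_label [simp]: "\<bar>label z\<bar> = 1"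
  by (simp add: label_def)

lemma label_square [simp]: "(label z)\<^sup>2 = 1"
  by (simp add: label_def)

lemma integral_label_mult:
  fixes v :: "real ^ 'd \<Rightarrow> real"
  assumes [measurable]: "v \<in> borel_measurable borel" and v: "\<And>x. \<bar>v x\<bar> \<le> B"
  shows "(\<integral>z. label z * v (fst z) \<partial>\<rho>) = (\<integral>x. (2 * \<eta> x - 1) * v x \<partial>\<rho>X)"
proof -
  have ind_v: "\<bar>indicator S x * v y\<bar> \<le> B" for S x y
    using v[of y] by (intro abs_mult_le_of_abs_le_one) (auto simp: indicator_def)
  have \<eta>_v: "\<bar>\<eta> x * v x\<bar> \<le> B" if "x \<in> unit_cube" for x
    using v[of x] \<eta>_range that by (intro abs_mult_le_of_abs_le_one) auto
  have "(\<integral>z. label z * v (fst z) \<partial>\<rho>)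
      = (\<integral>z. 2 * (indicator (UNIV \<times> {1}) z * v (fst z)) - v (fst z) \<partial>\<rho>)"
    by (simp add: label_eq algebra_simps)
  also have "\<dots> = 2 * (\<integral>z. indicator (UNIV \<times> {1}) z * v (fst z) \<partial>\<rho>) - (\<integral>z. v (fst z) \<partial>\<rho>)"
  proof -
    have "integrable \<rho> (\<lambda>z. indicator (UNIV \<times> {1}) z * v (fst z))"
      by (rule integrable_\<rho>_bounded[where B=B]) (simp_all add: ind_v)
    moreover have "integrable \<rho> (\<lambda>z. v (fst z))"
      by (rule integrable_\<rho>_bounded[where B=B]) (simp_all add: v)
    ultimately show ?thesis by simp
  qed
  also have "\<dots> = 2 * (\<integral>x. indicator unit_cube x * \<eta> x * v x \<partial>\<rho>X) - (\<integral>x. v x \<partial>\<rho>X)"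
    by (simp add: integral_label_one integral_fst_eq)
  also have "\<dots> = (\<integral>x. 2 * (indicator unit_cube x * \<eta> x * v x) - v x \<partial>\<rho>X)"
  proof -
    have "integrable \<rho>X (\<lambda>x. indicator unit_cube x * \<eta> x * v x)"
      by (rule integrable_\<rho>X_bounded[where B=B]) (simp_all add: \<eta>_v)
    moreover have "integrable \<rho>X v" by (rule integrable_\<rho>X_bounded[where B=B]) (simp_all add: v)
    ultimately show ?thesis by simp
  qed
  also have "\<dots> = (\<integral>x. (2 * \<eta> x - 1) * v x \<partial>\<rho>X)"
    by (intro integral_cong_AE) (use AE_unit_cube in \<open>auto simp: algebra_simps\<close>)
  finally show ?thesis .
qed

lemma hinge_risk_at_f\<rho>_le: "x \<in> unit_cube \<Longrightarrow> hinge_risk (\<eta> x) (f\<rho> x) \<le> hinge_risk (\<eta> x) t"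
  using f\<rho>_min by (simp add: hinge_risk_def)

lemma bayes_eq_one: "x \<in> unit_cube \<Longrightarrow> 1/2 < \<eta> x \<Longrightarrow> bayes x = 1"
  using hinge_risk_minimizer_ge_one[of "\<eta> x" "f\<rho> x"] \<eta>_range hinge_risk_at_f\<rho>_le
  by (simp add: bayes_def proj1_def)

lemma bayes_eq_neg_one: "x \<in> unit_cube \<Longrightarrow> \<eta> x < 1/2 \<Longrightarrow> bayes x = -1"
  using hinge_risk_minimizer_le_neg_one[of "\<eta> x" "f\<rho> x"] \<eta>_range hinge_risk_at_f\<rho>_le
  by (simp add: bayes_def proj1_def)

lemma \<eta>_eq_one_if_f\<rho>_gt_one: "x \<in> unit_cube \<Longrightarrow> 1 < f\<rho> x \<Longrightarrow> \<eta> x = 1"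
  using hinge_risk_minimizer_gt_one[of "\<eta> x" "f\<rho> x"] \<eta>_range hinge_risk_at_f\<rho>_le by simp

lemma \<eta>_eq_zero_if_f\<rho>_lt_neg_one: "x \<in> unit_cube \<Longrightarrow> f\<rho> x < -1 \<Longrightarrow> \<eta> x = 0"
  using hinge_risk_minimizer_lt_neg_one[of "\<eta> x" "f\<rho> x"] \<eta>_range hinge_risk_at_f\<rho>_le by simp

lemma borel_measurable_bayes [measurable]: "bayes \<in> borel_measurable borel"
  unfolding bayes_def by measurable

lemma abs_bayes_le_one: "\<bar>bayes x\<bar> \<le> 1"
  by (simp add: bayes_def abs_proj1_le_one)

lemma abs_bayes_diff_le_two: "\<bar>h x\<bar> \<le> 1 \<Longrightarrow> \<bar>bayes x - h x\<bar> \<le> 2"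
  using abs_bayes_le_one[of x] by linarith

text \<open>This identity is how the margin |2 \<eta> - 1|, and with it the Tsybakov condition,
  controls the variance.\<close>

lemma margin_mult_bayes_diff_eq_abs:
  assumes "x \<in> unit_cube" "\<bar>g\<bar> \<le> 1"
  shows "(2 * \<eta> x - 1) * (bayes x - g) = \<bar>2 * \<eta> x - 1\<bar> * \<bar>bayes x - g\<bar>"
proof -
  consider "1/2 < \<eta> x" | "\<eta> x < 1/2" | "\<eta> x = 1/2" by linarith
  then show ?thesis
    by cases (use assms bayes_eq_one bayes_eq_neg_one in \<open>auto simp: abs_mult abs_if algebra_simps\<close>)
qed

lemma integrable_\<rho>X_margin:
  assumes [measurable]: "h \<in> borel_measurable borel" and "\<And>x. \<bar>h x\<bar> \<le> B"
  shows "integrable \<rho>X (\<lambda>x. (2 * \<eta> x - 1) * h x)"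
  using assms abs_two_\<eta>_minus_one_le
  by (intro integrable_\<rho>X_bounded[where B=B] abs_mult_le_of_abs_le_one) auto

text \<open>Observations of positive conditional probability: on them the hinge loss of f\<rho> is
  affine in the label even where f\<rho> leaves [-1, 1].\<close>
definition typical :: "((real ^ 'd) \<times> real) set" where
  "typical = unit_cube \<times> {-1, 1} - ({x\<in>unit_cube. \<eta> x = 0} \<times> {1} \<union> {x\<in>unit_cube. \<eta> x = 1} \<times> {-1})"

lemma typical_in_sets_borel [measurable]: "typical \<in> sets borel"
  unfolding typical_def by measurable

lemma measure_label_one_where_\<eta>_zero: "measure \<rho> ({x\<in>unit_cube. \<eta> x = 0} \<times> {1}) = 0"
proof -
  have "measure \<rho> ({x\<in>unit_cube. \<eta> x = 0} \<times> {1}) = (\<integral>x. indicator {x\<in>unit_cube. \<eta> x = 0} x * \<eta> x \<partial>\<rho>X)"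
    using \<eta>_cond by (simp add: \<rho>X_def)
  also have "\<dots> = (\<integral>x. 0 \<partial>\<rho>X)"
    by (intro Bochner_Integration.integral_cong refl) (auto simp: indicator_def)
  finally show ?thesis by simp
qed

lemma measure_label_neg_one_where_\<eta>_one: "measure \<rho> ({x\<in>unit_cube. \<eta> x = 1} \<times> {-1}) = 0"
proof -
  define A where "A = {x\<in>unit_cube. \<eta> x = 1}"
  have [measurable]: "A \<in> sets borel" unfolding A_def by measurable
  have "measure \<rho> (A \<times> {-1}) + measure \<rho> (A \<times> {1}) = measure \<rho> (A \<times> {-1} \<union> A \<times> {1})"
    by (rule finite_measure_Union[symmetric]) (auto simp: sets_\<rho>)
  also have "\<dots> \<le> measure \<rho> (fst -` A \<inter> space \<rho>)"
    by (intro finite_measure_mono) (auto simp: sets_\<rho> space_\<rho>)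
  also have "\<dots> = measure \<rho>X A"
    unfolding \<rho>X_def by (rule measure_distr[symmetric]) auto
  also have "\<dots> = (\<integral>x. indicator A x \<partial>\<rho>X)" by (simp add: sets_\<rho>X)
  also have "\<dots> = (\<integral>x. indicator A x * \<eta> x \<partial>\<rho>X)"
    by (intro Bochner_Integration.integral_cong refl) (auto simp: A_def indicator_def)
  also have "\<dots> = measure \<rho> (A \<times> {1})"
    using \<eta>_cond by (simp add: \<rho>X_def)
  finally have "measure \<rho> (A \<times> {-1}) \<le> 0" by simp
  then show ?thesis unfolding A_def[symmetric] using measure_nonneg[of \<rho> "A \<times> {-1}"] by linarith
qed

lemma AE_typical: "AE z in \<rho>. z \<in> typical"
proof -
  have "{x\<in>unit_cube. \<eta> x = 0} \<times> {1} \<in> null_sets \<rho>" (is "?N0 \<in> _")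
    and "{x\<in>unit_cube. \<eta> x = 1} \<times> {-1} \<in> null_sets \<rho>" (is "?N1 \<in> _")
    using measure_label_one_where_\<eta>_zero measure_label_neg_one_where_\<eta>_one
    by (simp_all add: null_sets_def emeasure_eq_measure sets_\<rho>)
  from AE_support AE_not_in[OF this(1)] AE_not_in[OF this(2)] show ?thesis
    by eventually_elim (auto simp: typical_def)
qed

lemma hinge_eq_on_typical:
  assumes "z \<in> typical" "\<bar>u\<bar> \<le> 1"
  shows "hinge (snd z * u) = 1 - label z * u"
  using assms by (auto simp: typical_def label_def hinge_def)

lemma hinge_f\<rho>_eq_on_typical:
  assumes "z \<in> typical"
  shows "hinge (snd z * f\<rho> (fst z)) = 1 - label z * bayes (fst z)"
proof -
  obtain x y where z: "z = (x, y)" and x: "x \<in> unit_cube"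
    and y: "y = 1 \<and> \<eta> x \<noteq> 0 \<or> y = -1 \<and> \<eta> x \<noteq> 1"
    using assms by (cases z) (auto simp: typical_def)
  then have "y = 1 \<Longrightarrow> -1 \<le> f\<rho> x" "y = -1 \<Longrightarrow> f\<rho> x \<le> 1"
    using \<eta>_eq_zero_if_f\<rho>_lt_neg_one \<eta>_eq_one_if_f\<rho>_gt_one by force+
  then show ?thesis using y by (auto simp: z label_def hinge_def bayes_def proj1_def)
qed

lemma gen_error_eq_if_typical:
  assumes [measurable]: "f \<in> borel_measurable borel" "g \<in> borel_measurable borel"
    and "\<And>x. \<bar>g x\<bar> \<le> 1"
    and "\<And>z. z \<in> typical \<Longrightarrow> hinge (snd z * f (fst z)) = 1 - label z * g (fst z)"
  shows "gen_error \<rho> hinge f = 1 - (\<integral>z. label z * g (fst z) \<partial>\<rho>)"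
proof -
  have "gen_error \<rho> hinge f = (\<integral>z. 1 - label z * g (fst z) \<partial>\<rho>)"
    unfolding gen_error_def
    by (rule integral_cong_AE) (use AE_typical assms(4) in \<open>auto simp: measurable_\<rho>\<close>)
  also have "\<dots> = 1 - (\<integral>z. label z * g (fst z) \<partial>\<rho>)"
    using integrable_\<rho>_bounded[where B=1, of "\<lambda>z. label z * g (fst z)"] assms(3)
    by (simp add: prob_space abs_mult)
  finally show ?thesis .
qed

definition excess :: "(real ^ 'd \<Rightarrow> real) \<Rightarrow> real" where
  "excess h = (\<integral>x. (2 * \<eta> x - 1) * (bayes x - h x) \<partial>\<rho>X)"

definition emp_excess :: "nat \<Rightarrow> (nat \<Rightarrow> (real ^ 'd) \<times> real) \<Rightarrow> (real ^ 'd \<Rightarrow> real) \<Rightarrow> real" where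
  "emp_excess m D h = (\<Sum>i<m. label (D i) * (bayes (fst (D i)) - h (fst (D i)))) / real m"

lemma integral_label_bayes_diff:
  assumes [measurable]: "h \<in> borel_measurable borel" and "\<And>x. \<bar>h x\<bar> \<le> 1"
  shows "(\<integral>z. label z * (bayes (fst z) - h (fst z)) \<partial>\<rho>) = excess h"
  unfolding excess_def using abs_bayes_diff_le_two assms(2) by (intro integral_label_mult[where B=2]) auto

lemma gen_error_diff_eq_excess:
  assumes h_meas [measurable]: "h \<in> borel_measurable borel" and h: "\<And>x. \<bar>h x\<bar> \<le> 1"
  shows "gen_error \<rho> hinge h - gen_error \<rho> hinge f\<rho> = excess h"
proof -
  have "gen_error \<rho> hinge h - gen_error \<rho> hinge f\<rho>
      = (\<integral>z. label z * bayes (fst z) \<partial>\<rho>) - (\<integral>z. label z * h (fst z) \<partial>\<rho>)"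
    using gen_error_eq_if_typical[of h h] gen_error_eq_if_typical[of f\<rho> bayes]
      h hinge_eq_on_typical hinge_f\<rho>_eq_on_typical abs_bayes_le_one
    by simp
  also have "\<dots> = (\<integral>z. label z * (bayes (fst z) - h (fst z)) \<partial>\<rho>)"
    using integrable_\<rho>_bounded[where B=1, of "\<lambda>z. label z * h (fst z)"]
      integrable_\<rho>_bounded[where B=1, of "\<lambda>z. label z * bayes (fst z)"] h abs_bayes_le_one
    by (simp add: abs_mult algebra_simps)
  finally show ?thesis using integral_label_bayes_diff[OF h_meas h] by simp
qed

lemma emp_error_diff_eq_emp_excess:
  assumes "\<And>x. \<bar>h x\<bar> \<le> 1" and "\<And>i. i < m \<Longrightarrow> D i \<in> typical"
  shows "emp_error m D hinge h - emp_error m D hinge f\<rho> = emp_excess m D h"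
proof -
  have "emp_error m D hinge h - emp_error m D hinge f\<rho>
      = (\<Sum>i<m. hinge (snd (D i) * h (fst (D i))) - hinge (snd (D i) * f\<rho> (fst (D i)))) / real m"
    by (simp add: emp_error_def sum_subtractf diff_divide_distrib)
  also have "\<dots> = emp_excess m D h"
    unfolding emp_excess_def using assms
    by (intro arg_cong[where f="\<lambda>u. u / real m"] sum.cong)
       (simp_all add: hinge_eq_on_typical hinge_f\<rho>_eq_on_typical algebra_simps)
  finally show ?thesis .
qed

lemma abs_integral_margin_le:
  assumes [measurable]: "h \<in> borel_measurable borel" and h: "\<And>x. \<bar>h x\<bar> \<le> B"
  shows "\<bar>\<integral>x. (2 * \<eta> x - 1) * h x \<partial>\<rho>X\<bar> \<le> B"
proof -
  have "\<bar>\<integral>x. (2 * \<eta> x - 1) * h x \<partial>\<rho>X\<bar> \<le> (\<integral>x. \<bar>(2 * \<eta> x - 1) * h x\<bar> \<partial>\<rho>X)"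
    using integral_norm_bound[of \<rho>X "\<lambda>x. (2 * \<eta> x - 1) * h x"] by simp
  also have "\<dots> \<le> (\<integral>x. B \<partial>\<rho>X)"
  proof (rule integral_mono_AE)
    show "AE x in \<rho>X. \<bar>(2 * \<eta> x - 1) * h x\<bar> \<le> B"
      using AE_unit_cube by eventually_elim (intro abs_mult_le_of_abs_le_one abs_two_\<eta>_minus_one_le h)
  qed (use integrable_\<rho>X_margin[OF _ h] in simp_all)
  finally show ?thesis by (simp add: X.prob_space)
qed

lemma excess_nonneg:
  assumes [measurable]: "h \<in> borel_measurable borel" and "\<And>x. \<bar>h x\<bar> \<le> 1"
  shows "0 \<le> excess h"
  unfolding excess_def
  by (intro integral_nonneg_AE)
     (use AE_unit_cube in \<open>eventually_elim, simp add: margin_mult_bayes_diff_eq_abs assms(2)\<close>)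

lemma excess_le_two:
  assumes [measurable]: "h \<in> borel_measurable borel" and "\<And>x. \<bar>h x\<bar> \<le> 1"
  shows "excess h \<le> 2"
  using abs_integral_margin_le[of "\<lambda>x. bayes x - h x" 2] abs_bayes_diff_le_two assms
  by (simp add: excess_def)

lemma abs_excess_diff_le:
  assumes [measurable]: "h \<in> borel_measurable borel" "h' \<in> borel_measurable borel"
    and "\<And>x. \<bar>h x\<bar> \<le> 1" "\<And>x. \<bar>h' x\<bar> \<le> 1" and close: "\<And>x. \<bar>h x - h' x\<bar> \<le> \<epsilon>"
  shows "\<bar>excess h - excess h'\<bar> \<le> \<epsilon>"
proof -
  have "excess h - excess h' = (\<integral>x. (2 * \<eta> x - 1) * (h' x - h x) \<partial>\<rho>X)"
    unfolding excess_def
    using integrable_\<rho>X_margin[of "\<lambda>x. bayes x - h x" 2] integrable_\<rho>X_margin[of "\<lambda>x. bayes x - h' x" 2]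
      abs_bayes_diff_le_two assms(3,4)
    by (simp add: algebra_simps flip: Bochner_Integration.integral_diff)
  also have "\<bar>\<dots>\<bar> \<le> \<epsilon>"
    using close by (intro abs_integral_margin_le) (simp_all add: abs_minus_commute)
  finally show ?thesis .
qed

lemma abs_label_average_le:
  assumes "\<And>i. \<bar>u i\<bar> \<le> c"
  shows "\<bar>(\<Sum>i<m. label (D i) * u i) / real m\<bar> \<le> c"
proof -
  have "\<bar>\<Sum>i<m. label (D i) * u i\<bar> \<le> (\<Sum>i<m. c)"
    using assms by (intro order_trans[OF sum_abs] sum_mono) (simp add: abs_mult)
  then show ?thesis
    using assms[of 0] by (cases "m = 0") (auto simp: divide_le_eq mult.commute)
qed

lemma abs_emp_excess_le_two: "(\<And>x. \<bar>h x\<bar> \<le> 1) \<Longrightarrow> \<bar>emp_excess m D h\<bar> \<le> 2"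
  unfolding emp_excess_def by (intro abs_label_average_le abs_bayes_diff_le_two)

lemma abs_emp_excess_diff_le:
  assumes "\<And>x. \<bar>h x - h' x\<bar> \<le> \<epsilon>"
  shows "\<bar>emp_excess m D h - emp_excess m D h'\<bar> \<le> \<epsilon>"
proof -
  have "emp_excess m D h - emp_excess m D h' = (\<Sum>i<m. label (D i) * (h' (fst (D i)) - h (fst (D i)))) / real m"
    by (simp add: emp_excess_def diff_divide_distrib[symmetric] sum_subtractf[symmetric] algebra_simps)
  also have "\<bar>\<dots>\<bar> \<le> \<epsilon>"
    using assms by (intro abs_label_average_le) (simp add: abs_minus_commute)
  finally show ?thesis .
qed

lemma measurable_sample_component [measurable]:
  "i \<in> I \<Longrightarrow> (\<lambda>D. D i) \<in> PiM I (\<lambda>_. \<rho>) \<rightarrow>\<^sub>M borel"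
  using measurable_component_singleton[of i I "\<lambda>_. \<rho>"]
  by (simp add: measurable_cong_sets[OF refl sets_\<rho>])

lemma borel_measurable_emp_excess [measurable]:
  assumes [measurable]: "h \<in> borel_measurable borel"
  shows "(\<lambda>D. emp_excess m D h) \<in> borel_measurable (PiM {..<m} (\<lambda>_. \<rho>))"
  unfolding emp_excess_def by measurable

lemma typical_samples_in_sets:
  fixes m :: nat
  shows "{D \<in> space (PiM {..<m} (\<lambda>_. \<rho>)). \<forall>i\<in>{..<m}. D i \<in> typical} \<in> sets (PiM {..<m} (\<lambda>_. \<rho>))"
proof (rule sets.sets_Collect_finite_All)
  fix i :: nat assume "i \<in> {..<m}"
  from measurable_sets[OF measurable_sample_component[OF this] typical_in_sets_borel]
  show "{D \<in> space (PiM {..<m} (\<lambda>_. \<rho>)). D i \<in> typical} \<in> sets (PiM {..<m} (\<lambda>_. \<rho>))"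
    by (simp add: vimage_def Int_def conj_commute)
qed simp

lemma excess_deviation_transfer:
  assumes [measurable]: "g \<in> borel_measurable borel" "h \<in> borel_measurable borel"
    and g: "\<And>x. \<bar>g x\<bar> \<le> 1" and h: "\<And>x. \<bar>h x\<bar> \<le> 1" and close: "\<And>x. \<bar>g x - h x\<bar> \<le> \<epsilon>"
    and deviation: "excess h - emp_excess m D h < \<gamma> * excess h + R" and "0 \<le> \<gamma>"
  shows "excess g - emp_excess m D g \<le> \<gamma> * excess g + (\<gamma> + 2) * \<epsilon> + R"
proof -
  have "\<bar>excess g - excess h\<bar> \<le> \<epsilon>" using g h close by (intro abs_excess_diff_le) simp_all
  moreover have "\<bar>emp_excess m D g - emp_excess m D h\<bar> \<le> \<epsilon>" using close by (rule abs_emp_excess_diff_le)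
  moreover have "\<gamma> * excess h \<le> \<gamma> * (excess g + \<epsilon>)"
    using \<open>0 \<le> \<gamma>\<close> calculation(1) by (intro mult_left_mono) auto
  ultimately show ?thesis using deviation by (simp add: algebra_simps abs_le_iff)
qed

lemma prob_typical_samples:
  fixes m :: nat
  shows "measure (PiM {..<m} (\<lambda>_. \<rho>)) {D \<in> space (PiM {..<m} (\<lambda>_. \<rho>)). \<forall>i\<in>{..<m}. D i \<in> typical} = 1"
proof -
  interpret PP: product_prob_space "\<lambda>_. \<rho>" "{..<m}" by unfold_locales
  have "measure \<rho> typical = 1" using AE_typical AE_in_set_eq_1[of typical] by (simp add: sets_\<rho>)
  then have "emeasure (PiM {..<m} (\<lambda>_. \<rho>)) {D \<in> space (PiM {..<m} (\<lambda>_. \<rho>)). \<forall>i\<in>{..<m}. D i \<in> typical} = 1"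
    by (subst PP.emeasure_PiM_Collect) (auto simp: sets_\<rho> emeasure_eq_measure)
  then show ?thesis by (simp add: measure_def)
qed

end

section \<open>Concentration under the Tsybakov noise condition\<close>

locale hinge_tsybakov = hinge_classification +
  fixes q \<kappa> :: real
  assumes q_pos: "0 < q" and \<kappa>_pos: "0 < \<kappa>"
    and margin: "\<And>t. 0 < t \<Longrightarrow> measure (distr \<rho> borel fst) {x\<in>unit_cube. \<bar>2 * \<eta> x - 1\<bar> \<le> \<kappa> * t} \<le> t powr q"
begin

text \<open>Split the cube at margin \<kappa> t: the small-margin part has measure at most t^q, and
  on the rest the deviation is dominated by the integrand of the excess risk divided by \<kappa> t.\<close>

lemma integral_abs_bayes_diff_le:
  assumes [measurable]: "h \<in> borel_measurable borel" and h: "\<And>x. \<bar>h x\<bar> \<le> 1" and "0 < t"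
  shows "(\<integral>x. \<bar>bayes x - h x\<bar> \<partial>\<rho>X) \<le> 2 * t powr q + excess h / (\<kappa> * t)"
proof -
  define A where "A = {x\<in>unit_cube. \<bar>2 * \<eta> x - 1\<bar> \<le> \<kappa> * t}"
  have [measurable]: "A \<in> sets borel" unfolding A_def by measurable
  have \<kappa>t: "0 < \<kappa> * t" using \<kappa>_pos \<open>0 < t\<close> by simp
  have pointwise: "\<bar>bayes x - h x\<bar> \<le> 2 * indicator A x + (2 * \<eta> x - 1) * (bayes x - h x) / (\<kappa> * t)"
    if "x \<in> unit_cube" for x
  proof (cases "x \<in> A")
    case True
    have "0 \<le> (2 * \<eta> x - 1) * (bayes x - h x) / (\<kappa> * t)"
      using \<kappa>t margin_mult_bayes_diff_eq_abs[OF that h] by simp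
    then show ?thesis using True abs_bayes_diff_le_two[of h x, OF h] by simp
  next
    case False
    then have "\<kappa> * t * \<bar>bayes x - h x\<bar> \<le> \<bar>2 * \<eta> x - 1\<bar> * \<bar>bayes x - h x\<bar>"
      using that by (intro mult_right_mono) (auto simp: A_def)
    then show ?thesis
      using False \<kappa>t margin_mult_bayes_diff_eq_abs[OF that h] by (simp add: le_divide_eq mult.commute)
  qed
  have "(\<integral>x. \<bar>bayes x - h x\<bar> \<partial>\<rho>X)
      \<le> (\<integral>x. 2 * indicator A x + (2 * \<eta> x - 1) * (bayes x - h x) / (\<kappa> * t) \<partial>\<rho>X)"
  proof (rule integral_mono_AE)
    show "integrable \<rho>X (\<lambda>x. \<bar>bayes x - h x\<bar>)"
      using abs_bayes_diff_le_two[of h, OF h] by (intro integrable_\<rho>X_bounded[where B=2]) auto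
    show "integrable \<rho>X (\<lambda>x. 2 * indicator A x + (2 * \<eta> x - 1) * (bayes x - h x) / (\<kappa> * t))"
      using integrable_\<rho>X_margin[of "\<lambda>x. bayes x - h x" 2] abs_bayes_diff_le_two[of h, OF h]
        integrable_\<rho>X_bounded[where B=1, of "indicator A"]
      by (intro Bochner_Integration.integrable_add integrable_divide) auto
  qed (use AE_unit_cube pointwise in auto)
  also have "\<dots> = 2 * measure \<rho>X A + excess h / (\<kappa> * t)"
    using integrable_\<rho>X_margin[of "\<lambda>x. bayes x - h x" 2] abs_bayes_diff_le_two[of h, OF h]
      integrable_\<rho>X_bounded[where B=1, of "indicator A"]
    by (simp add: excess_def sets_\<rho>X)
  also have "\<dots> \<le> 2 * t powr q + excess h / (\<kappa> * t)"
    using margin[OF \<open>0 < t\<close>] by (simp add: A_def \<rho>X_def)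
  finally show ?thesis .
qed

lemma centred_loss_variance_le:
  assumes [measurable]: "h \<in> borel_measurable borel" and h: "\<And>x. \<bar>h x\<bar> \<le> 1" and "0 < t"
  shows "(\<integral>z. (excess h - label z * (bayes (fst z) - h (fst z)))\<^sup>2 \<partial>\<rho>)
           \<le> 4 * t powr q + 2 * excess h / (\<kappa> * t)"
proof -
  let ?\<xi> = "\<lambda>z. label z * (bayes (fst z) - h (fst z))"
  have \<xi>: "\<bar>?\<xi> z\<bar> \<le> 2" for z by (simp add: abs_mult abs_bayes_diff_le_two[of h, OF h])
  have int_\<xi>: "integrable \<rho> ?\<xi>" by (rule integrable_\<rho>_bounded[OF _ \<xi>]) simp
  have "\<bar>(?\<xi> z)\<^sup>2\<bar> \<le> 4" for z using power_mono[OF \<xi> abs_ge_zero, of z 2] by simp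
  then have int_\<xi>2: "integrable \<rho> (\<lambda>z. (?\<xi> z)\<^sup>2)" by (intro integrable_\<rho>_bounded) simp_all
  have "(\<integral>z. (excess h - ?\<xi> z)\<^sup>2 \<partial>\<rho>) = (\<integral>z. (excess h)\<^sup>2 - 2 * excess h * ?\<xi> z + (?\<xi> z)\<^sup>2 \<partial>\<rho>)"
    unfolding power2_diff by (intro Bochner_Integration.integral_cong refl) linarith
  also have "\<dots> = (excess h)\<^sup>2 - 2 * excess h * (\<integral>z. ?\<xi> z \<partial>\<rho>) + (\<integral>z. (?\<xi> z)\<^sup>2 \<partial>\<rho>)"
    using int_\<xi> int_\<xi>2 by (simp add: prob_space)
  also have "\<dots> = (\<integral>z. (?\<xi> z)\<^sup>2 \<partial>\<rho>) - (excess h)\<^sup>2"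
    using integral_label_bayes_diff[of h, OF _ h] by (simp add: power2_eq_square)
  also have "\<dots> \<le> (\<integral>x. (bayes x - h x)\<^sup>2 \<partial>\<rho>X)"
    using integral_fst_eq[of "\<lambda>x. (bayes x - h x)\<^sup>2"] by (simp add: power_mult_distrib)
  also have "\<dots> \<le> (\<integral>x. 2 * \<bar>bayes x - h x\<bar> \<partial>\<rho>X)"
  proof (rule integral_mono)
    fix x
    have "\<bar>bayes x - h x\<bar> \<le> 2" using h by (rule abs_bayes_diff_le_two)
    then show sq: "(bayes x - h x)\<^sup>2 \<le> 2 * \<bar>bayes x - h x\<bar>"
      by (metis abs_ge_zero mult_right_mono power2_abs power2_eq_square)
  next
    have bound_sq: "\<bar>(bayes x - h x)\<^sup>2\<bar> \<le> 4" and bound_abs: "\<bar>2 * \<bar>bayes x - h x\<bar>\<bar> \<le> 4" for x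
      using power_mono[OF abs_bayes_diff_le_two[of h x, OF h] abs_ge_zero, of 2]
        abs_bayes_diff_le_two[of h x, OF h] by simp_all
    show "integrable \<rho>X (\<lambda>x. (bayes x - h x)\<^sup>2)"
      by (rule integrable_\<rho>X_bounded[where B=4]) (use bound_sq in auto)
    show "integrable \<rho>X (\<lambda>x. 2 * \<bar>bayes x - h x\<bar>)"
      by (rule integrable_\<rho>X_bounded[where B=4]) (use bound_abs in auto)
  qed
  also have "\<dots> \<le> 2 * (2 * t powr q + excess h / (\<kappa> * t))"
    using integral_abs_bayes_diff_le[of h, OF _ h \<open>0 < t\<close>] by simp
  finally show ?thesis by simp
qed

lemma prob_emp_excess_deviation_le:
  fixes m :: nat
  assumes [measurable]: "h \<in> borel_measurable borel" and h: "\<And>x. \<bar>h x\<bar> \<le> 1"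
    and "0 < m" "0 < a" "0 < t"
  defines "V \<equiv> 4 * t powr q + 2 * excess h / (\<kappa> * t)"
  shows "measure (PiM {..<m} (\<lambda>_. \<rho>))
           {D \<in> space (PiM {..<m} (\<lambda>_. \<rho>)). 2 * sqrt (V * a) + 8 * a \<le> excess h - emp_excess m D h}
         \<le> exp (- (real m * a))"
proof -
  let ?P = "PiM {..<m} (\<lambda>_. \<rho>)"
  define \<epsilon> where "\<epsilon> = 2 * sqrt (V * a) + 8 * a"
  define W where "W z = excess h - label z * (bayes (fst z) - h (fst z))" for z
  have excess: "0 \<le> excess h" "excess h \<le> 2" using excess_nonneg excess_le_two h by auto
  have V: "0 < V" using \<open>0 < t\<close> excess \<kappa>_pos by (simp add: V_def add_pos_nonneg)
  have "\<bar>label z * (bayes (fst z) - h (fst z))\<bar> \<le> 2" for z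
    by (simp add: abs_mult abs_bayes_diff_le_two[of h, OF h])
  then have W: "W z \<le> 4" "\<bar>W z\<bar> \<le> 4" for z
    unfolding W_def abs_le_iff using excess by (smt (verit))+
  have "integral\<^sup>L \<rho> W = 0"
    using integral_label_bayes_diff[of h, OF _ h]
      integrable_\<rho>_bounded[where B=2, of "\<lambda>z. label z * (bayes (fst z) - h (fst z))"]
      abs_bayes_diff_le_two[of h, OF h]
    by (simp add: W_def[abs_def] prob_space abs_mult)
  moreover have "integral\<^sup>L \<rho> (\<lambda>z. (W z)\<^sup>2) \<le> V"
    using centred_loss_variance_le[of h, OF _ h \<open>0 < t\<close>] by (simp add: W_def V_def)
  ultimately have "measure ?P {D \<in> space ?P. real m * \<epsilon> \<le> (\<Sum>i<m. W (D i))}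
      \<le> exp (- (real m * min (\<epsilon> / (2 * 4)) (\<epsilon>\<^sup>2 / (4 * V))))"
    using W V \<open>0 < a\<close> prob
    by (intro bernstein_iid_upper_tail[where B=4]) (auto simp: \<epsilon>_def W_def[abs_def] measurable_\<rho> add_nonneg_pos)
  also have "\<dots> \<le> exp (- (real m * a))"
  proof -
    have "(2 * sqrt (V * a))\<^sup>2 \<le> \<epsilon>\<^sup>2" using \<open>0 < a\<close> V by (intro power_mono) (auto simp: \<epsilon>_def)
    then have "4 * (V * a) \<le> \<epsilon>\<^sup>2" using V \<open>0 < a\<close> by (simp add: power_mult_distrib)
    then have "a \<le> min (\<epsilon> / (2 * 4)) (\<epsilon>\<^sup>2 / (4 * V))"
      using V \<open>0 < a\<close> by (simp add: \<epsilon>_def le_divide_eq mult.commute mult.left_commute)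
    then show ?thesis by (simp add: mult_left_mono)
  qed
  also have "{D \<in> space ?P. real m * \<epsilon> \<le> (\<Sum>i<m. W (D i))}
      = {D \<in> space ?P. \<epsilon> \<le> excess h - emp_excess m D h}"
  proof -
    have "real m * (excess h - S / real m) = real m * excess h - S" for S
      using \<open>0 < m\<close> by (simp add: right_diff_distrib)
    then have "(\<Sum>i<m. W (D i)) = real m * (excess h - emp_excess m D h)" for D
      by (simp add: W_def emp_excess_def sum_subtractf)
    then show ?thesis using \<open>0 < m\<close> by (simp add: mult_le_cancel_left_pos)
  qed
  finally show ?thesis by (simp add: \<epsilon>_def)
qed

text \<open>The scale t = a^(1/(q+2)) balances the two terms of the variance bound.\<close>

lemma prob_excess_deviation_le:
  fixes m :: nat
  assumes [measurable]: "h \<in> borel_measurable borel" and h: "\<And>x. \<bar>h x\<bar> \<le> 1"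
    and "0 < m" "0 < a" "0 < \<gamma>"
  shows "measure (PiM {..<m} (\<lambda>_. \<rho>)) {D \<in> space (PiM {..<m} (\<lambda>_. \<rho>)).
           \<gamma> * excess h + (4 + 2 / (\<kappa> * \<gamma>)) * a powr ((q + 1) / (q + 2)) + 8 * a
             \<le> excess h - emp_excess m D h}
         \<le> exp (- (real m * a))"
proof -
  let ?P = "PiM {..<m} (\<lambda>_. \<rho>)"
  interpret PP: prob_space ?P by (rule prob_space_PiM) (simp add: prob)
  define t where "t = a powr (1 / (q + 2))"
  define V where "V = 4 * t powr q + 2 * excess h / (\<kappa> * t)"
  have "2 * sqrt (V * a) + 8 * a \<le> \<gamma> * excess h + (4 + 2 / (\<kappa> * \<gamma>)) * a powr ((q + 1) / (q + 2)) + 8 * a"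
    using sqrt_tsybakov_variance_le[OF q_pos \<open>0 < a\<close> \<kappa>_pos excess_nonneg[of h, OF _ h] \<open>0 < \<gamma>\<close>]
    by (simp add: V_def t_def mult.commute)
  then have "measure ?P {D \<in> space ?P. \<gamma> * excess h + (4 + 2 / (\<kappa> * \<gamma>)) * a powr ((q + 1) / (q + 2)) + 8 * a
             \<le> excess h - emp_excess m D h}
      \<le> measure ?P {D \<in> space ?P. 2 * sqrt (V * a) + 8 * a \<le> excess h - emp_excess m D h}"
    by (intro PP.finite_measure_mono) auto
  also have "\<dots> \<le> exp (- (real m * a))"
    using \<open>0 < a\<close> by (simp add: V_def t_def prob_emp_excess_deviation_le[OF _ h \<open>0 < m\<close>])
  finally show ?thesis .
qed

text \<open>With a = ln (2N/\<delta>)/m each of the N deviation events has probability at most \<delta>/(2N).\<close>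

lemma uniform_excess_deviation:
  fixes m :: nat
  assumes "finite H" "H \<noteq> {}" and H_meas: "\<And>h. h \<in> H \<Longrightarrow> h \<in> borel_measurable borel"
    and H_bound: "\<And>h x. h \<in> H \<Longrightarrow> \<bar>h x\<bar> \<le> 1" and "0 < m" "0 < \<delta>" "\<delta> < 1" "0 < \<gamma>"
    and a_def: "a = ln (2 * real (card H) / \<delta>) / real m"
  obtains S where "S \<in> sets (PiM {..<m} (\<lambda>_. \<rho>))" "1 - \<delta> / 2 \<le> measure (PiM {..<m} (\<lambda>_. \<rho>)) S"
    "\<And>D i. D \<in> S \<Longrightarrow> i < m \<Longrightarrow> D i \<in> typical"
    "\<And>D h. D \<in> S \<Longrightarrow> h \<in> H \<Longrightarrow> excess h - emp_excess m D h
       < \<gamma> * excess h + (4 + 2 / (\<kappa> * \<gamma>)) * a powr ((q + 1) / (q + 2)) + 8 * a"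
proof -
  let ?P = "PiM {..<m} (\<lambda>_. \<rho>)"
  interpret PP: prob_space ?P by (rule prob_space_PiM) (simp add: prob)
  define N where "N = real (card H)"
  define Typ where "Typ = {D \<in> space ?P. \<forall>i\<in>{..<m}. D i \<in> typical}"
  define Bad where "Bad h = {D \<in> space ?P. \<gamma> * excess h + (4 + 2 / (\<kappa> * \<gamma>)) * a powr ((q + 1) / (q + 2))
    + 8 * a \<le> excess h - emp_excess m D h}" for h
  define S where "S = Typ - (\<Union>h\<in>H. Bad h)"
  have N: "1 \<le> N" using \<open>finite H\<close> \<open>H \<noteq> {}\<close> by (simp add: N_def Suc_le_eq card_gt_0_iff)
  have Bad_sets: "Bad h \<in> sets ?P" if "h \<in> H" for h
    using H_meas[OF that] unfolding Bad_def by measurable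
  have Typ_sets: "Typ \<in> sets ?P" unfolding Typ_def by (rule typical_samples_in_sets)
  have "a > 0" using N \<open>0 < m\<close> \<open>0 < \<delta>\<close> \<open>\<delta> < 1\<close> by (simp add: a_def N_def[symmetric] less_divide_eq)
  have Bad_prob: "measure ?P (Bad h) \<le> \<delta> / (2 * N)" if "h \<in> H" for h
  proof -
    have "measure ?P (Bad h) \<le> exp (- (real m * a))"
      unfolding Bad_def using H_meas[OF that] H_bound[OF that] \<open>0 < m\<close> \<open>0 < a\<close> \<open>0 < \<gamma>\<close>
      by (rule prob_excess_deviation_le)
    also have "\<dots> = \<delta> / (2 * N)"
      using \<open>0 < m\<close> N \<open>0 < \<delta>\<close> by (simp add: a_def N_def[symmetric] exp_minus)
    finally show ?thesis .
  qed
  have S_sets: "S \<in> sets ?P" using Typ_sets Bad_sets \<open>finite H\<close> by (auto simp: S_def)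
  have "measure ?P (space ?P - S) \<le> measure ?P ((space ?P - Typ) \<union> (\<Union>h\<in>H. Bad h))"
    using Typ_sets Bad_sets \<open>finite H\<close> by (intro PP.finite_measure_mono) (auto simp: S_def)
  also have "\<dots> \<le> measure ?P (space ?P - Typ) + measure ?P (\<Union>h\<in>H. Bad h)"
    using Typ_sets Bad_sets \<open>finite H\<close> by (intro measure_subadditive) (auto simp: PP.emeasure_eq_measure)
  also have "measure ?P (space ?P - Typ) = 0"
    using PP.prob_compl[OF Typ_sets] prob_typical_samples[of m] by (simp add: Typ_def)
  also have "measure ?P (\<Union>h\<in>H. Bad h) \<le> (\<Sum>h\<in>H. measure ?P (Bad h))"
    using Bad_sets \<open>finite H\<close> by (intro PP.finite_measure_subadditive_finite) auto
  also have "\<dots> \<le> (\<Sum>h\<in>H. \<delta> / (2 * N))" by (intro sum_mono Bad_prob)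
  also have "\<dots> = \<delta> / 2" using N by (simp add: N_def)
  finally have "1 - \<delta> / 2 \<le> measure ?P S" using PP.prob_compl[OF S_sets] by simp
  show ?thesis
  proof (rule that[OF S_sets \<open>1 - \<delta> / 2 \<le> measure ?P S\<close>])
    show "D i \<in> typical" if "D \<in> S" "i < m" for D i using that by (auto simp: S_def Typ_def)
    show "excess h - emp_excess m D h
       < \<gamma> * excess h + (4 + 2 / (\<kappa> * \<gamma>)) * a powr ((q + 1) / (q + 2)) + 8 * a"
      if "D \<in> S" "h \<in> H" for D h
      using that by (auto simp: S_def Typ_def Bad_def not_le)
  qed
qed

lemma sample_error_le_of_close_deviation:
  fixes m :: nat
  assumes [measurable]: "g \<in> borel_measurable borel" "h \<in> borel_measurable borel"
    and g: "\<And>x. \<bar>g x\<bar> \<le> 1" and h: "\<And>x. \<bar>h x\<bar> \<le> 1" and close: "\<And>x. \<bar>g x - h x\<bar> \<le> \<epsilon>"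
    and typical: "\<And>i. i < m \<Longrightarrow> D i \<in> typical"
    and deviation: "excess h - emp_excess m D h
                      < \<gamma> * excess h + (4 + 2 / (\<kappa> * \<gamma>)) * a powr ((q + 1) / (q + 2)) + 8 * a"
    and "0 < \<gamma>" "0 < a" "a \<le> r * \<Lambda>" "0 \<le> r" "1 \<le> \<Lambda>" "0 < c" "c * \<epsilon> \<le> r powr ((q + 1) / (q + 2))"
    and "4 \<le> C" "(\<gamma> + 2) / c + (4 + 2 / (\<kappa> * \<gamma>)) + 8 \<le> C"
  shows "(gen_error \<rho> hinge g - gen_error \<rho> hinge f\<rho>) - (emp_error m D hinge g - emp_error m D hinge f\<rho>)
           \<le> \<gamma> * (gen_error \<rho> hinge g - gen_error \<rho> hinge f\<rho>) + C * r powr ((q + 1) / (q + 2)) * \<Lambda>"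
proof -
  have "excess g - emp_excess m D g
          \<le> \<gamma> * excess g + (\<gamma> + 2) * \<epsilon> + ((4 + 2 / (\<kappa> * \<gamma>)) * a powr ((q + 1) / (q + 2)) + 8 * a)"
    using g h close deviation \<open>0 < \<gamma>\<close> by (intro excess_deviation_transfer[where h=h]) (simp_all add: algebra_simps)
  then have "excess g - emp_excess m D g \<le> \<gamma> * excess g + C * r powr ((q + 1) / (q + 2)) * \<Lambda>"
    using assms \<kappa>_pos q_pos excess_nonneg[of g, OF _ g] excess_le_two[of g, OF _ g]
      abs_emp_excess_le_two[of g m D, OF g]
    by (intro deviation_rate_le[where \<epsilon>=\<epsilon> and c=c and K="4 + 2 / (\<kappa> * \<gamma>)" and a=a])
       (auto simp: algebra_simps abs_le_iff)
  then show ?thesis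
    using gen_error_diff_eq_excess[of g, OF _ g] emp_error_diff_eq_emp_excess[of g m D, OF g typical] by simp
qed

lemma regularized_hinge_sample_error:
  fixes m :: nat
  assumes "0 < m" "0 < lam" "0 < \<delta>" "\<delta> < 1" "0 < \<gamma>" "0 < c" "0 < \<epsilon>" "0 \<le> L"
    and cover: "\<And>e. 0 < e \<Longrightarrow> covering_number unit_cube (rkhs_ball unit_cube K 1) e < \<infinity>"
    and log_cover: "ln (real (the_enat (covering_number unit_cube (rkhs_ball unit_cube K 1) (sqrt lam * \<epsilon>)))) \<le> L"
    and rate: "c * \<epsilon> \<le> ((L + 1) / m) powr ((q + 1) / (q + 2))"
    and in_rkhs: "\<And>D. in_rkhs unit_cube K (fD D)"
    and minimizer: "\<And>D. emp_error m D hinge (fD D) + lam * (rkhs_norm unit_cube K (fD D))\<^sup>2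
                        \<le> emp_error m D hinge (\<lambda>_. 0) + lam * (rkhs_norm unit_cube K (\<lambda>_. 0))\<^sup>2"
    and C: "4 \<le> C" "(\<gamma> + 2) / c + (4 + 2 / (\<kappa> * \<gamma>)) + 8 \<le> C"
  shows "\<exists>S \<in> sets (PiM {..<m} (\<lambda>_. \<rho>)).
           S \<subseteq> {D. (gen_error \<rho> hinge (proj1 (fD D)) - gen_error \<rho> hinge f\<rho>)
                     - (emp_error m D hinge (proj1 (fD D)) - emp_error m D hinge f\<rho>)
                   \<le> \<gamma> * (gen_error \<rho> hinge (proj1 (fD D)) - gen_error \<rho> hinge f\<rho>)
                     + C * ((L + 1) / m) powr ((q + 1) / (q + 2)) * ln (4 / \<delta>)}
           \<and> 1 - \<delta> / 2 \<le> measure (PiM {..<m} (\<lambda>_. \<rho>)) S"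
proof -
  have "0 < sqrt lam" using \<open>0 < lam\<close> by simp
  obtain H where "finite H" "H \<noteq> {}"
    and card_H: "card H \<le> the_enat (covering_number unit_cube (rkhs_ball unit_cube K 1) (sqrt lam * \<epsilon>))"
    and H_meas: "\<And>h. h \<in> H \<Longrightarrow> h \<in> borel_measurable borel" and H_bound: "\<And>h x. h \<in> H \<Longrightarrow> \<bar>h x\<bar> \<le> 1"
    and H_net: "\<And>f. (\<lambda>x. sqrt lam * f x) \<in> rkhs_ball unit_cube K 1 \<Longrightarrow> \<exists>h\<in>H. \<forall>x. \<bar>proj1 f x - h x\<bar> \<le> \<epsilon>"
    using truncated_rkhs_net[OF unit_cube_in_sets_borel \<open>0 < sqrt lam\<close>] \<open>0 < \<epsilon>\<close> cover \<open>0 < sqrt lam\<close>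
    by (metis less_eq_real_def mult_pos_pos)
  define N where "N = real (card H)"
  define a where "a = ln (2 * N / \<delta>) / real m"
  have N: "1 \<le> N" using \<open>finite H\<close> \<open>H \<noteq> {}\<close> by (simp add: N_def Suc_le_eq card_gt_0_iff)
  have "ln N \<le> ln (real (the_enat (covering_number unit_cube (rkhs_ball unit_cube K 1) (sqrt lam * \<epsilon>))))"
    using N card_H by (subst ln_le_cancel_iff) (auto simp: N_def)
  then have "ln N \<le> L" using log_cover by linarith
  then have a: "0 < a" "a \<le> (L + 1) / m * ln (4 / \<delta>)"
    using ln_union_bound_le[of \<delta> N L] assms N by (auto simp: a_def divide_right_mono less_divide_eq)
  obtain S where "S \<in> sets (PiM {..<m} (\<lambda>_. \<rho>))" "1 - \<delta> / 2 \<le> measure (PiM {..<m} (\<lambda>_. \<rho>)) S"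
    and S_typical: "\<And>D i. D \<in> S \<Longrightarrow> i < m \<Longrightarrow> D i \<in> typical"
    and S_dev: "\<And>D h. D \<in> S \<Longrightarrow> h \<in> H \<Longrightarrow> excess h - emp_excess m D h
       < \<gamma> * excess h + (4 + 2 / (\<kappa> * \<gamma>)) * a powr ((q + 1) / (q + 2)) + 8 * a"
    by (rule uniform_excess_deviation[of H m \<delta> \<gamma> a]) (use \<open>finite H\<close> \<open>H \<noteq> {}\<close> H_meas H_bound assms in
        \<open>auto simp: a_def N_def\<close>)
  moreover have "(gen_error \<rho> hinge (proj1 (fD D)) - gen_error \<rho> hinge f\<rho>)
                     - (emp_error m D hinge (proj1 (fD D)) - emp_error m D hinge f\<rho>)
                   \<le> \<gamma> * (gen_error \<rho> hinge (proj1 (fD D)) - gen_error \<rho> hinge f\<rho>)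
                     + C * ((L + 1) / m) powr ((q + 1) / (q + 2)) * ln (4 / \<delta>)" if "D \<in> S" for D
  proof -
    have ball: "(\<lambda>x. sqrt lam * fD D x) \<in> rkhs_ball unit_cube K 1"
      using regularized_minimizer_in_rkhs_ball[OF _ \<open>0 < lam\<close> in_rkhs minimizer] \<open>0 < m\<close> by simp
    then have "proj1 (fD D) \<in> borel_measurable borel"
      using borel_measurable_of_scaled_in_rkhs_ball[OF _ cover \<open>0 < sqrt lam\<close>] by simp
    moreover obtain h where "h \<in> H" "\<And>x. \<bar>proj1 (fD D) x - h x\<bar> \<le> \<epsilon>" using H_net[OF ball] by blast
    ultimately show ?thesis
      using S_dev[OF that] S_typical[OF that] H_meas H_bound a assms one_le_ln_four_div[OF \<open>0 < \<delta>\<close> \<open>\<delta> < 1\<close>]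
      by (intro sample_error_le_of_close_deviation[where h=h and \<epsilon>=\<epsilon> and c=c and a=a])
         (simp_all add: abs_proj1_le_one)
  qed
  ultimately show ?thesis by blast
qed

end

theorem proposition5:
  fixes \<rho> :: "((real ^ 'd) \<times> real) measure"
    and \<eta> :: "real ^ 'd \<Rightarrow> real"
    and q :: real
    and K :: "real ^ 'd \<Rightarrow> real ^ 'd \<Rightarrow> real"
    and \<A> :: real
    and \<psi> :: "real \<Rightarrow> real"
    and f\<rho> :: "real ^ 'd \<Rightarrow> real"
    and \<theta> C4 :: real
  assumes prob: "prob_space \<rho>"
    and sets_\<rho>: "sets \<rho> = sets borel"
    and support: "measure \<rho> (unit_cube \<times> {-1, 1}) = 1"
    and \<eta>_meas: "\<eta> \<in> borel_measurable borel"
    and \<eta>_range: "\<forall>x\<in>unit_cube. 0 \<le> \<eta> x \<and> \<eta> x \<le> 1"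
    and \<eta>_cond: "\<forall>A\<in>sets borel. measure \<rho> (A \<times> {1}) =
                   (\<integral>x. indicator A x * \<eta> x \<partial>(distr \<rho> borel fst))"
    and q_pos: "0 < q"
    and tsyb: "tsybakov (distr \<rho> borel fst) unit_cube \<eta> q"
    and mercer: "mercer_kernel unit_cube K"
    and A_pos: "0 < \<A>"
    and \<psi>_pos: "\<forall>u>0. 0 < \<psi> u"
    and \<psi>_decr: "\<forall>u v. 0 < u \<and> u \<le> v \<longrightarrow> \<psi> v \<le> \<psi> u"
    and \<psi>_cont: "continuous_on {0<..} \<psi>"
    and cover: "\<forall>\<epsilon>>0. covering_number unit_cube (rkhs_ball unit_cube K 1) \<epsilon> < \<infinity> \<and>
                  ln (real (the_enat (covering_number unit_cube (rkhs_ball unit_cube K 1) \<epsilon>)))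
                    \<le> \<A> * \<psi> \<epsilon>"
    and f\<rho>_meas: "f\<rho> \<in> borel_measurable borel"
    and f\<rho>_min: "\<forall>x\<in>unit_cube. \<forall>t.
                   \<eta> x * hinge (f\<rho> x) + (1 - \<eta> x) * hinge (- f\<rho> x)
                     \<le> \<eta> x * hinge t + (1 - \<eta> x) * hinge (- t)"
    and \<theta>_pos: "0 < \<theta>"
    and C4_pos: "0 < C4"
  shows "\<exists>C7. \<forall>(m::nat) (lam::real) (\<delta>::real)
            (fD :: (nat \<Rightarrow> (real ^ 'd) \<times> real) \<Rightarrow> real ^ 'd \<Rightarrow> real).
     0 < m \<and> 0 < lam \<and> 0 < \<delta> \<and> \<delta> < 1 \<and>
     ((\<A> * \<psi> (sqrt lam * real m powr (- \<theta>)) + 1) / real m) powr ((q + 1) / (q + 2))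
        \<ge> C4 * real m powr (- \<theta>) \<and>
     (\<forall>D. in_rkhs unit_cube K (fD D) \<and>
        (\<forall>g. in_rkhs unit_cube K g \<longrightarrow>
           emp_error m D hinge (fD D) + lam * (rkhs_norm unit_cube K (fD D))\<^sup>2
             \<le> emp_error m D hinge g + lam * (rkhs_norm unit_cube K g)\<^sup>2))
     \<longrightarrow>
     (\<exists>S \<in> sets (PiM {..<m} (\<lambda>_. \<rho>)).
        S \<subseteq> {D. (gen_error \<rho> hinge (proj1 (fD D)) - gen_error \<rho> hinge f\<rho>)
                  - (emp_error m D hinge (proj1 (fD D)) - emp_error m D hinge f\<rho>)
               \<le> q / (2 * q + 2) * 2 powr ((q + 1) / (2 * q))
                   * (gen_error \<rho> hinge (proj1 (fD D)) - gen_error \<rho> hinge f\<rho>)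
                 + C7 * ((\<A> * \<psi> (sqrt lam * real m powr (- \<theta>)) + 1) / real m)
                          powr ((q + 1) / (q + 2)) * ln (4 / \<delta>)} \<and>
        measure (PiM {..<m} (\<lambda>_. \<rho>)) S \<ge> 1 - \<delta> / 2)"
proof -
  obtain \<kappa> where "0 < \<kappa>"
    "\<And>t. 0 < t \<Longrightarrow> measure (distr \<rho> borel fst) {x\<in>unit_cube. \<bar>2 * \<eta> x - 1\<bar> \<le> \<kappa> * t} \<le> t powr q"
    using tsyb unfolding tsybakov_def by blast
  then interpret hinge_tsybakov \<rho> \<eta> f\<rho> q \<kappa>
    using prob sets_\<rho> support \<eta>_meas \<eta>_range \<eta>_cond f\<rho>_meas f\<rho>_min q_pos
    by (intro hinge_tsybakov.intro hinge_tsybakov_axioms.intro hinge_classification.intro)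
  let ?Cq = "q / (2 * q + 2) * 2 powr ((q + 1) / (2 * q))"
  have "0 < ?Cq" using q_pos by simp
  show ?thesis
  proof (intro exI[of _ "max 4 ((?Cq + 2) / C4 + (4 + 2 / (\<kappa> * ?Cq)) + 8)"] allI impI, elim conjE, goal_cases)
    case (1 m lam \<delta> fD)
    have r: "0 < sqrt lam * real m powr (- \<theta>)" using 1 by simp
    then have "0 \<le> \<A> * \<psi> (sqrt lam * real m powr (- \<theta>))" using A_pos \<psi>_pos[rule_format, OF r] by simp
    moreover have "emp_error m D hinge (fD D) + lam * (rkhs_norm unit_cube K (fD D))\<^sup>2
        \<le> emp_error m D hinge (\<lambda>_. 0) + lam * (rkhs_norm unit_cube K (\<lambda>_. 0))\<^sup>2" for D
      using 1 in_rkhs_zero by blast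
    ultimately show ?case
      using 1 cover r \<open>0 < ?Cq\<close> C4_pos by (intro regularized_hinge_sample_error) auto
  qed
qed

end
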